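(* There exists an online algorithm for $\textsc{Strip-Packing}$ with competitive ratio $O(n^{\log 3-1}\log n)$, where $n$ is the number of pieces and $\log$ denotes the base-$2$ logarithm.
   Context: $\textsc{Strip-Packing}$: pieces are convex polygons arriving one at a time; each must be placed irrevocably, by translation only (no rotation), inside the strip $[0,\infty)\times[0,1]$, interior-disjoint from all previously placed pieces, before the next piece is revealed. The cost is the largest $x$-coordinate of a point of a placed piece. An algorithm $\mathcal A$ has competitive ratio $f(n)$ if $\mathcal A(I)\le f(n)\cdot \mathrm{OPT}(I)$ for every instance $I$ with $n$ pieces, where $\mathrm{OPT}(I)$ is the offline optimal cost. *)

theory Defs
  imports "HOL-Analysis.Analysis" "HOL-Library.Landau_Symbols"
begin

type_synonym point = "real \<times> real"

definition convex_polygon :: "point set \<Rightarrow> bool" where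
  "convex_polygon P \<longleftrightarrow> (\<exists>V. finite V \<and> P = convex hull V) \<and> interior P \<noteq> {}"

definition strip :: "point set" where
  "strip = {p. 0 \<le> fst p \<and> 0 \<le> snd p \<and> snd p \<le> 1}"

definition translate :: "point \<Rightarrow> point set \<Rightarrow> point set" where
  "translate t P = (\<lambda>p. p + t) ` P"

text \<open>An instance is a list of pieces (in arrival order); each must be a convex polygon
  that fits into the strip by some translation.\<close>
definition admissible_instance :: "point set list \<Rightarrow> bool" where
  "admissible_instance I \<longleftrightarrow>
     (\<forall>P\<in>set I. convex_polygon P \<and> (\<exists>t. translate t P \<subseteq> strip))"

definition valid_placement :: "point set list \<Rightarrow> (nat \<Rightarrow> point) \<Rightarrow> bool" where
  "valid_placement I t \<longleftrightarrow>
     (\<forall>i<length I. translate (t i) (I ! i) \<subseteq> strip) \<and>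
     (\<forall>i<length I. \<forall>j<length I. i \<noteq> j \<longrightarrow>
        interior (translate (t i) (I ! i)) \<inter> interior (translate (t j) (I ! j)) = {})"

definition packing_cost :: "point set list \<Rightarrow> (nat \<Rightarrow> point) \<Rightarrow> real" where
  "packing_cost I t = Sup (\<Union>i<length I. fst ` translate (t i) (I ! i))"

definition OPT :: "point set list \<Rightarrow> real" where
  "OPT I = Inf {packing_cost I t | t. valid_placement I t}"

text \<open>A deterministic online algorithm: given the list of pieces revealed so far (the last
  one being the current piece), it returns the translation for the current piece.  Its
  decision thus depends only on the pieces revealed so far and is irrevocable.\<close>
type_synonym online_alg = "point set list \<Rightarrow> point"

definition alg_placement :: "online_alg \<Rightarrow> point set list \<Rightarrow> nat \<Rightarrow> point" where
  "alg_placement A I i = A (take (Suc i) I)"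

definition online_valid :: "online_alg \<Rightarrow> bool" where
  "online_valid A \<longleftrightarrow>
     (\<forall>I. admissible_instance I \<longrightarrow> valid_placement I (alg_placement A I))"

definition has_competitive_ratio :: "online_alg \<Rightarrow> (nat \<Rightarrow> real) \<Rightarrow> bool" where
  "has_competitive_ratio A f \<longleftrightarrow> online_valid A \<and>
     (\<forall>I. admissible_instance I \<and> I \<noteq> [] \<longrightarrow>
        packing_cost I (alg_placement A I) \<le> f (length I) * OPT I)"

end

theory Submission
  imports Defs "HOL-Real_Asymp.Real_Asymp"
begin

text \<open>
  The algorithm sorts the pieces into classes, determined by the level \<open>a\<close> of the index
  (\<open>4^(a-1) < i + 1 \<le> 4^a\<close>), the width rounded up to a power of two, a row height \<open>2^-k\<close>
  at least the height of the piece and, unless the piece is flat, its slope rounded to a multiple of a granularity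
  that shrinks like \<open>2^-a\<close>.  Each class fills its own bins row by row, the rows being
  parallelograms of the class slope, and a new bin opens at the right end of the packing.
  Amortised, the cost is at most one bin per class plus a charge of \<open>4 \<cdot> row height \<cdot> length in
  the row\<close> per piece.  There are \<open>O(\<surd>n log\<^sup>2 n)\<close> classes, and for every level, row height
  and slope the first bins of the various widths cost \<open>O(OPT)\<close>.  Flat pieces are charged
  \<open>O(width/\<surd>(i + 1))\<close>; a steep piece of height about \<open>2^-k\<close> is charged about its extent
  along its own slope over \<open>2^k\<close>, and these extents sum to \<open>O(2^k OPT)\<close>, because in any packing a
  horizontal line through the middle half of such a convex piece meets it in a chord of at least
  a quarter of that extent.  Hence the ratio is \<open>O(\<surd>n log\<^sup>2 n)\<close>, which is within
  \<open>O(n^(log 3 - 1) log n)\<close>.\<close>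

section \<open>Extremal values of linear functionals on compact sets\<close>

definition min_on :: "('a \<Rightarrow> real) \<Rightarrow> 'a set \<Rightarrow> real" where
  "min_on f S = Inf (f ` S)"

definition max_on :: "('a \<Rightarrow> real) \<Rightarrow> 'a set \<Rightarrow> real" where
  "max_on f S = Sup (f ` S)"

definition extent :: "('a \<Rightarrow> real) \<Rightarrow> 'a set \<Rightarrow> real" where
  "extent f S = max_on f S - min_on f S"

abbreviation height :: "point set \<Rightarrow> real" where
  "height \<equiv> extent snd"

abbreviation width :: "point set \<Rightarrow> real" where
  "width \<equiv> extent fst"

definition shear :: "real \<Rightarrow> point \<Rightarrow> real" where
  "shear s p = fst p - s * snd p"

lemma linear_shear: "linear (shear s)"
  unfolding shear_def by (auto simp: linear_iff algebra_simps)

lemma shear_0 [simp]: "shear 0 = fst"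
  by (simp add: shear_def fun_eq_iff)

context
  fixes f :: "point \<Rightarrow> real" and S :: "point set"
  assumes f: "linear f" and S: "compact S"
begin

lemma continuous_on_linear: "continuous_on A f"
  using f by (simp add: linear_continuous_on linear_conv_bounded_linear)

lemma bdd_linear_image: "bdd_below (f ` S)" "bdd_above (f ` S)"
  using compact_imp_bounded[OF compact_continuous_image[OF continuous_on_linear S]]
  by (auto intro: bounded_imp_bdd_below bounded_imp_bdd_above)

lemma min_on_le: "x \<in> S \<Longrightarrow> min_on f S \<le> f x"
  unfolding min_on_def using bdd_linear_image by (auto intro: cInf_lower)

lemma le_max_on: "x \<in> S \<Longrightarrow> f x \<le> max_on f S"
  unfolding max_on_def using bdd_linear_image by (auto intro: cSup_upper)

lemma min_on_attained:
  assumes "S \<noteq> {}" obtains x where "x \<in> S" "f x = min_on f S"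
proof -
  obtain x where "x \<in> S" "\<forall>y\<in>S. f x \<le> f y"
    using continuous_attains_inf[OF S assms continuous_on_linear] by blast
  moreover from this have "min_on f S = f x"
    unfolding min_on_def by (intro cInf_eq_minimum) auto
  ultimately show thesis using that by simp
qed

lemma max_on_attained:
  assumes "S \<noteq> {}" obtains x where "x \<in> S" "f x = max_on f S"
proof -
  obtain x where "x \<in> S" "\<forall>y\<in>S. f y \<le> f x"
    using continuous_attains_sup[OF S assms continuous_on_linear] by blast
  moreover from this have "max_on f S = f x"
    unfolding max_on_def by (intro cSup_eq_maximum) auto
  ultimately show thesis using that by simp
qed

lemma extent_nonneg: "S \<noteq> {} \<Longrightarrow> 0 \<le> extent f S"
  unfolding extent_def by (metis min_on_attained le_max_on order.trans min_on_le diff_ge_0_iff_ge)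

lemma image_translate: "f ` translate t S = (\<lambda>x. f t + f x) ` S"
  unfolding translate_def image_image using linear_add[OF f] by (simp add: add.commute)

lemma min_on_translate: "S \<noteq> {} \<Longrightarrow> min_on f (translate t S) = min_on f S + f t"
  unfolding min_on_def image_translate using Inf_add_eq[OF bdd_linear_image(1)] by simp

lemma max_on_translate: "S \<noteq> {} \<Longrightarrow> max_on f (translate t S) = max_on f S + f t"
  unfolding max_on_def image_translate using Sup_add_eq[OF bdd_linear_image(2)] by simp

lemma extent_translate: "S \<noteq> {} \<Longrightarrow> extent f (translate t S) = extent f S"
  unfolding extent_def by (simp add: min_on_translate max_on_translate)

end

lemma compact_translate: "compact S \<Longrightarrow> compact (translate t S)"
  unfolding translate_def by (auto intro!: compact_continuous_image continuous_intros)

lemma mem_translate: "p \<in> S \<Longrightarrow> p + t \<in> translate t S"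
  unfolding translate_def by auto

lemma extent_shear_le:
  assumes "compact S" "S \<noteq> {}"
  shows "extent (shear s) S \<le> extent (shear s') S + \<bar>s - s'\<bar> * height S"
proof -
  note lin = linear_shear linear_snd
  obtain p where p: "p \<in> S" "shear s p = max_on (shear s) S" using max_on_attained[OF lin(1) assms] .
  obtain q where q: "q \<in> S" "shear s q = min_on (shear s) S" using min_on_attained[OF lin(1) assms] .
  have "min_on snd S \<le> snd p" "snd p \<le> max_on snd S" "min_on snd S \<le> snd q" "snd q \<le> max_on snd S"
    using min_on_le[OF lin(2) assms(1)] le_max_on[OF lin(2) assms(1)] p(1) q(1) by auto
  then have "\<bar>snd q - snd p\<bar> \<le> height S" unfolding extent_def by linarith
  then have "\<bar>s - s'\<bar> * \<bar>snd q - snd p\<bar> \<le> \<bar>s - s'\<bar> * height S"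
    by (rule mult_left_mono) simp
  then have "(s - s') * (snd q - snd p) \<le> \<bar>s - s'\<bar> * height S"
    by (metis abs_ge_self abs_mult order.trans)
  moreover have "shear s' p - shear s' q \<le> extent (shear s') S"
    using min_on_le[OF linear_shear assms(1) q(1), of s'] le_max_on[OF linear_shear assms(1) p(1), of s']
    unfolding extent_def by simp
  moreover have "extent (shear s) S = shear s' p - shear s' q + (s - s') * (snd q - snd p)"
    unfolding extent_def p(2)[symmetric] q(2)[symmetric] shear_def by (simp add: algebra_simps)
  ultimately show ?thesis by linarith
qed

lemma extent_shear_le_width:
  "compact S \<Longrightarrow> S \<noteq> {} \<Longrightarrow> extent (shear s) S \<le> width S + \<bar>s\<bar> * height S"
  using extent_shear_le[of S s 0] by simp

section \<open>Separation by linear functionals\<close>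

lemma linear_less_on_interior:
  fixes f :: "'a::euclidean_space \<Rightarrow> real"
  assumes f: "linear f" and v: "0 < f v" and S: "S \<subseteq> {x. f x \<le> b}" and x: "x \<in> interior S"
  shows "f x < b"
proof -
  obtain e where e: "0 < e" "ball x e \<subseteq> S" using x by (meson mem_interior)
  have "v \<noteq> 0" using v linear_0[OF f] by auto
  define y where "y = x + (e / (2 * norm v)) *\<^sub>R v"
  have "y \<in> ball x e" using e \<open>v \<noteq> 0\<close> by (simp add: y_def dist_norm)
  then have "f y \<le> b" using e S by blast
  moreover have "f y = f x + e / (2 * norm v) * f v"
    unfolding y_def using linear_add[OF f] linear_scale[OF f] by simp
  moreover have "0 < e / (2 * norm v) * f v" using e v \<open>v \<noteq> 0\<close> by simp
  ultimately show ?thesis by linarith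
qed

lemma interiors_disjoint_if_separated:
  fixes f :: "'a::euclidean_space \<Rightarrow> real"
  assumes S: "S \<subseteq> {x. f x \<le> c}" and T: "T \<subseteq> {x. c \<le> f x}"
    and f: "linear f" and v: "f v \<noteq> 0"
  shows "interior S \<inter> interior T = {}"
proof -
  obtain w where w: "0 < f w"
  proof (cases "0 < f v")
    case False
    then show thesis using that[of "- v"] v linear_neg[OF f, of v] by simp
  qed
  have "f x < c" if "x \<in> interior S" for x by (rule linear_less_on_interior[OF f w S that])
  moreover have "- f x < - c" if "x \<in> interior T" for x
    using linear_less_on_interior[of "\<lambda>x. - f x" "- w" T "- c" x] f w T that
    by (auto simp: linear_neg linear_compose_neg)
  ultimately show ?thesis by force
qed

section \<open>Horizontal chords of convex sets\<close>

lemma not_collinear_if_level: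
  fixes f :: "point \<Rightarrow> real"
  assumes f: "linear f" and "f B = f T" "f R \<noteq> f B" "B \<noteq> T"
  shows "\<not> collinear {B, T, R}"
proof
  assume "collinear {B, T, R}"
  then obtain u where u: "\<forall>x\<in>{B, T, R}. \<forall>y\<in>{B, T, R}. \<exists>c. x - y = c *\<^sub>R u"
    unfolding collinear_def by blast
  obtain c1 where c1: "R - B = c1 *\<^sub>R u" using u by blast
  obtain c2 where c2: "T - B = c2 *\<^sub>R u" using u by blast
  have "c2 \<noteq> 0" using c2 assms(4) by auto
  have "f T - f B = c2 * f u" "f R - f B = c1 * f u"
    using linear_diff[OF f, of T B] linear_diff[OF f, of R B]
    by (simp_all add: c1 c2 linear_scale[OF f])
  then show False using assms(2,3) \<open>c2 \<noteq> 0\<close> by simp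
qed

text \<open>
  The line through \<open>B\<close> and \<open>T\<close> meets height \<open>l\<close> at \<open>shear s B + s * l\<close>.  The point is the
  one with barycentric weight \<open>\<theta>/4\<close> on \<open>R\<close>; as \<open>l\<close> lies in the middle half of
  \<open>[snd B, snd T]\<close>, its weights on \<open>B\<close> and \<open>T\<close> are positive.\<close>

lemma triangle_chord_in_interior:
  fixes B T R :: point
  assumes y: "snd B < snd T" "snd B \<le> snd R" "snd R \<le> snd T"
    and sh: "shear s B = shear s T" "shear s R \<noteq> shear s B"
    and l: "snd T - snd B \<le> 4 * (l - snd B)" "snd T - snd B \<le> 4 * (snd T - l)"
    and \<theta>: "0 < \<theta>" "\<theta> < 1"
  shows "(shear s B + s * l + \<theta> * (shear s R - shear s B) / 4, l) \<in> interior (convex hull {B, T, R})"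
proof -
  define c where "c = \<theta> / 4"
  define b where "b = ((l - snd B) - c * (snd R - snd B)) / (snd T - snd B)"
  define a where "a = 1 - b - c"
  have c: "0 < c" "c < 1/4" using \<theta> by (auto simp: c_def)
  have "c * (snd T - snd B) < (snd T - snd B) / 4" using c y by simp
  then have quarter: "c * d < (snd T - snd B) / 4" if "d \<le> snd T - snd B" for d
    using that c by (smt (verit) mult_left_mono)
  have "c * (snd R - snd B) < l - snd B" "c * (snd T - snd R) < snd T - l"
    using quarter[of "snd R - snd B"] quarter[of "snd T - snd R"] y l by simp_all
  then have b: "0 < b" "b < 1 - c" using y unfolding b_def by (auto simp: field_simps)
  have "b * (snd T - snd B) = (l - snd B) - c * (snd R - snd B)" using y by (simp add: b_def)
  then have "snd (a *\<^sub>R B + b *\<^sub>R T + c *\<^sub>R R) = l" unfolding a_def by (simp add: algebra_simps)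
  moreover have "shear s (a *\<^sub>R B + b *\<^sub>R T + c *\<^sub>R R) = a * shear s B + b * shear s T + c * shear s R"
    by (simp add: shear_def algebra_simps)
  then have "shear s (a *\<^sub>R B + b *\<^sub>R T + c *\<^sub>R R) = shear s B + c * (shear s R - shear s B)"
    using sh(1) unfolding a_def by (simp add: algebra_simps)
  moreover have "p = (shear s p + s * snd p, snd p)" for p :: point by (simp add: shear_def)
  ultimately have "a *\<^sub>R B + b *\<^sub>R T + c *\<^sub>R R = (shear s B + c * (shear s R - shear s B) + s * l, l)"
    by metis
  also have "\<dots> = (shear s B + s * l + \<theta> * (shear s R - shear s B) / 4, l)"
    by (simp add: c_def)
  finally have "a *\<^sub>R B + b *\<^sub>R T + c *\<^sub>R R = (shear s B + s * l + \<theta> * (shear s R - shear s B) / 4, l)" .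
  moreover have "0 < a" "a + b + c = 1" using b by (auto simp: a_def)
  ultimately have "\<exists>x y z. 0 < x \<and> 0 < y \<and> 0 < z \<and> x + y + z = 1 \<and>
      x *\<^sub>R B + y *\<^sub>R T + z *\<^sub>R R = (shear s B + s * l + \<theta> * (shear s R - shear s B) / 4, l)"
    using b c by (intro exI[of _ a] exI[of _ b] exI[of _ c]) simp
  moreover have "\<not> collinear {B, T, R}"
    using not_collinear_if_level[OF linear_shear sh] y by auto
  ultimately show ?thesis by (simp add: interior_convex_hull_3_minimal)
qed

lemma open_segment_in_chord:
  fixes Q :: "point set" and B T V :: point
  assumes Q: "convex Q" "B \<in> Q" "T \<in> Q" "V \<in> Q"
    and y: "snd B < snd T" "snd B \<le> snd V" "snd V \<le> snd T" and sh: "shear s B = shear s T"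
    and l: "snd T - snd B \<le> 4 * (l - snd B)" "snd T - snd B \<le> 4 * (snd T - l)"
  shows "open_segment (shear s B + s * l) (shear s B + s * l + (shear s V - shear s B) / 4)
    \<subseteq> {x. (x, l) \<in> interior Q}"
proof
  fix x assume "x \<in> open_segment (shear s B + s * l) (shear s B + s * l + (shear s V - shear s B) / 4)"
  then obtain \<theta> where "shear s V \<noteq> shear s B" "0 < \<theta>" "\<theta> < 1"
    "x = (1 - \<theta>) * (shear s B + s * l) + \<theta> * (shear s B + s * l + (shear s V - shear s B) / 4)"
    by (auto simp: in_segment)
  moreover have "interior (convex hull {B, T, V}) \<subseteq> interior Q"
    using Q by (intro interior_mono hull_minimal) auto
  ultimately show "x \<in> {x. (x, l) \<in> interior Q}"
    using triangle_chord_in_interior[OF y sh _ l] by (auto simp: algebra_simps)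
qed

text \<open>
  The chord contains the two segments cut out of the triangles spanned by \<open>B\<close>, \<open>T\<close> and the two
  points where the shear is extremal.\<close>

lemma chord_measure_ge:
  fixes Q :: "point set" and B T :: point
  assumes Q: "compact Q" "convex Q" and BT: "B \<in> Q" "T \<in> Q"
    and yB: "snd B = min_on snd Q" and yT: "snd T = max_on snd Q" and h: "0 < height Q"
    and l: "height Q \<le> 4 * (l - min_on snd Q)" "height Q \<le> 4 * (max_on snd Q - l)"
  shows "extent (shear ((fst T - fst B) / height Q)) Q / 4 \<le> measure lborel {x. (x, l) \<in> interior Q}"
proof -
  define s where "s = (fst T - fst B) / height Q"
  define J where "J = {x. (x, l) \<in> interior Q}"
  define x\<^sub>0 where "x\<^sub>0 = shear s B + s * l"
  have ne: "Q \<noteq> {}" using BT by auto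
  have hBT: "height Q = snd T - snd B" using yB yT by (simp add: extent_def)
  have sh: "shear s B = shear s T" using h unfolding s_def shear_def hBT by (simp add: field_simps)
  obtain R where R: "R \<in> Q" "shear s R = max_on (shear s) Q"
    using max_on_attained[OF linear_shear Q(1) ne] .
  obtain L where L: "L \<in> Q" "shear s L = min_on (shear s) Q"
    using min_on_attained[OF linear_shear Q(1) ne] .
  have R0: "0 \<le> shear s R - shear s B" and L0: "shear s L - shear s B \<le> 0"
    using R L le_max_on[OF linear_shear Q(1) BT(1)] min_on_le[OF linear_shear Q(1) BT(1)] by auto
  have seg: "open_segment x\<^sub>0 (x\<^sub>0 + (shear s V - shear s B) / 4) \<subseteq> J" if "V \<in> Q" for V
    using open_segment_in_chord[OF Q(2) BT that, of s l] that sh h l yB yT hBT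
      min_on_le[OF linear_snd Q(1)] le_max_on[OF linear_snd Q(1)]
    unfolding J_def x\<^sub>0_def by simp
  have sub: "{x\<^sub>0 + (shear s L - shear s B) / 4 <..< x\<^sub>0} \<union> {x\<^sub>0 <..< x\<^sub>0 + (shear s R - shear s B) / 4} \<subseteq> J"
    using seg[OF L(1)] seg[OF R(1)] R0 L0 by (simp add: open_segment_eq_real_ivl split: if_splits)
  have "J \<subseteq> fst ` Q" using interior_subset unfolding J_def by force
  moreover have "J = (\<lambda>x. (x, l)) -` interior Q" unfolding J_def by auto
  then have "open J" by (auto intro!: continuous_open_vimage continuous_intros)
  ultimately have J: "J \<in> fmeasurable lborel"
    using compact_continuous_image[OF continuous_on_fst[OF continuous_on_id] Q(1)]
    by (intro fmeasurableI2[OF fmeasurable_compact[of "fst ` Q"]]) auto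
  have "extent (shear s) Q / 4 = measure lborel {x\<^sub>0 + (shear s L - shear s B) / 4 <..< x\<^sub>0}
      + measure lborel {x\<^sub>0 <..< x\<^sub>0 + (shear s R - shear s B) / 4}"
    using R L R0 L0 by (simp add: extent_def field_simps)
  also have "\<dots> = measure lborel ({x\<^sub>0 + (shear s L - shear s B) / 4 <..< x\<^sub>0}
      \<union> {x\<^sub>0 <..< x\<^sub>0 + (shear s R - shear s B) / 4})"
    using R0 L0 by (intro measure_Union[symmetric]) (auto simp: emeasure_lborel_Ioo)
  also have "\<dots> \<le> measure lborel J" using sub J by (intro measure_mono_fmeasurable) auto
  finally show ?thesis unfolding s_def J_def .
qed

section \<open>Pieces and lower bounds for the optimum\<close>

definition bottom_point :: "point set \<Rightarrow> point" where
  "bottom_point P = (SOME p. p \<in> P \<and> snd p = min_on snd P)"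

definition top_point :: "point set \<Rightarrow> point" where
  "top_point P = (SOME p. p \<in> P \<and> snd p = max_on snd P)"

text \<open>The slope \<open>dx/dy\<close> of the segment from a lowest to a highest point.\<close>

definition slope :: "point set \<Rightarrow> real" where
  "slope P = (fst (top_point P) - fst (bottom_point P)) / height P"

definition skew_width :: "point set \<Rightarrow> real" where
  "skew_width P = extent (shear (slope P)) P"

lemma convex_translate: "convex S \<Longrightarrow> convex (translate t S)"
  unfolding translate_def using convex_translation[of S t] by (simp add: add.commute)

locale piece =
  fixes P :: "point set"
  assumes compact: "compact P" and convex: "convex P" and interior_nonempty: "interior P \<noteq> {}"
    and height_le_1: "height P \<le> 1"
begin

lemma nonempty: "P \<noteq> {}"
  using interior_nonempty interior_subset by blast

lemma bottom_point: "bottom_point P \<in> P" "snd (bottom_point P) = min_on snd P"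
proof -
  obtain p where "p \<in> P" "snd p = min_on snd P" using min_on_attained[OF linear_snd compact nonempty] .
  then have "\<exists>p. p \<in> P \<and> snd p = min_on snd P" by blast
  from someI_ex[OF this] show "bottom_point P \<in> P" "snd (bottom_point P) = min_on snd P"
    unfolding bottom_point_def by auto
qed

lemma top_point: "top_point P \<in> P" "snd (top_point P) = max_on snd P"
proof -
  obtain p where "p \<in> P" "snd p = max_on snd P" using max_on_attained[OF linear_snd compact nonempty] .
  then have "\<exists>p. p \<in> P \<and> snd p = max_on snd P" by blast
  from someI_ex[OF this] show "top_point P \<in> P" "snd (top_point P) = max_on snd P"
    unfolding top_point_def by auto
qed

lemma height_pos: "0 < height P" and width_pos: "0 < width P"
proof -
  obtain q e where e: "0 < e" "ball q e \<subseteq> P"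
    using interior_nonempty by (auto simp: mem_interior)
  have "q + (e/2, 0) \<in> ball q e" "q - (e/2, 0) \<in> ball q e" "q + (0, e/2) \<in> ball q e"
    "q - (0, e/2) \<in> ball q e"
    using e(1) by (simp_all add: dist_norm)
  then have "q + (e/2, 0) \<in> P" "q - (e/2, 0) \<in> P" "q + (0, e/2) \<in> P" "q - (0, e/2) \<in> P"
    using e(2) by blast+
  then have "fst q + e/2 \<le> max_on fst P" "min_on fst P \<le> fst q - e/2"
    "snd q + e/2 \<le> max_on snd P" "min_on snd P \<le> snd q - e/2"
    using le_max_on[OF linear_fst compact, of "q + (e/2, 0)"] min_on_le[OF linear_fst compact, of "q - (e/2, 0)"]
      le_max_on[OF linear_snd compact, of "q + (0, e/2)"] min_on_le[OF linear_snd compact, of "q - (0, e/2)"]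
    by simp_all
  then show "0 < height P" "0 < width P" using e(1) unfolding extent_def by auto
qed

lemma abs_slope_height_le_width: "\<bar>slope P\<bar> * height P \<le> width P"
proof -
  have "min_on fst P \<le> fst (top_point P)" "fst (top_point P) \<le> max_on fst P"
    "min_on fst P \<le> fst (bottom_point P)" "fst (bottom_point P) \<le> max_on fst P"
    using le_max_on[OF linear_fst compact] min_on_le[OF linear_fst compact] top_point bottom_point
    by auto
  then have "\<bar>fst (top_point P) - fst (bottom_point P)\<bar> \<le> width P"
    unfolding extent_def by linarith
  then show ?thesis using height_pos by (simp add: slope_def abs_divide)
qed

lemma skew_width_le_width: "skew_width P \<le> 2 * width P"
  using extent_shear_le_width[OF compact nonempty, of "slope P"] abs_slope_height_le_width
  unfolding skew_width_def by linarith

end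

lemma admissible_piece:
  assumes I: "admissible_instance I" and i: "i < length I"
  shows "piece (I ! i)"
proof -
  have "I ! i \<in> set I" using i by simp
  then have "convex_polygon (I ! i)" and "\<exists>t. translate t (I ! i) \<subseteq> strip"
    using I unfolding admissible_instance_def by blast+
  then obtain V t where V: "finite V" "I ! i = convex hull V" and int: "interior (I ! i) \<noteq> {}"
    and t: "translate t (I ! i) \<subseteq> strip"
    unfolding convex_polygon_def by blast
  have P: "compact (I ! i)" "convex (I ! i)" using V by (simp_all add: finite_imp_compact_convex_hull)
  have ne: "I ! i \<noteq> {}" using int interior_subset by blast
  then have "translate t (I ! i) \<noteq> {}" by (simp add: translate_def)
  note Q = linear_snd compact_translate[OF P(1)] this
  obtain p where p: "p \<in> translate t (I ! i)" "snd p = min_on snd (translate t (I ! i))"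
    using min_on_attained[OF Q] .
  obtain q where q: "q \<in> translate t (I ! i)" "snd q = max_on snd (translate t (I ! i))"
    using max_on_attained[OF Q] .
  have "0 \<le> snd p" "snd q \<le> 1" using t p(1) q(1) by (auto simp: strip_def)
  then have "height (translate t (I ! i)) \<le> 1" using p(2) q(2) unfolding extent_def by simp
  then have "height (I ! i) \<le> 1" using extent_translate[OF linear_snd P(1) ne] by simp
  then show ?thesis using P int by unfold_locales
qed

lemma fst_le_packing_cost:
  assumes "admissible_instance I" "i < length I" "q \<in> translate (t i) (I ! i)"
  shows "fst q \<le> packing_cost I t"
proof -
  have "compact (translate (t j) (I ! j))" if "j < length I" for j
    using piece.compact[OF admissible_piece[OF assms(1) that]] compact_translate by blast
  then have "compact (\<Union>j<length I. fst ` translate (t j) (I ! j))"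
    by (auto intro!: compact_UN compact_continuous_image continuous_intros)
  then have "bdd_above (\<Union>j<length I. fst ` translate (t j) (I ! j))"
    by (intro bounded_imp_bdd_above compact_imp_bounded)
  then show ?thesis unfolding packing_cost_def using assms by (intro cSup_upper) auto
qed

lemma packing_cost_le:
  assumes "admissible_instance I" "I \<noteq> []"
    and "\<And>i q. i < length I \<Longrightarrow> q \<in> translate (t i) (I ! i) \<Longrightarrow> fst q \<le> X"
  shows "packing_cost I t \<le> X"
proof -
  have "I ! 0 \<noteq> {}" using piece.nonempty[OF admissible_piece[OF assms(1)]] assms(2) by simp
  then have "(\<Union>i<length I. fst ` translate (t i) (I ! i)) \<noteq> {}"
    using assms(2) by (auto simp: translate_def)
  then show ?thesis unfolding packing_cost_def using assms(3) by (intro cSup_least) auto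
qed

lemma sum_measure_disjoint_le:
  fixes J :: "'i \<Rightarrow> real set"
  assumes "finite S" "\<And>i. i \<in> S \<Longrightarrow> J i \<in> sets lborel" "disjoint_family_on J S"
    "\<And>i. i \<in> S \<Longrightarrow> J i \<subseteq> {a..b}" "a \<le> b"
  shows "(\<Sum>i\<in>S. measure lborel (J i)) \<le> b - a"
proof -
  have "emeasure lborel (J i) \<le> emeasure lborel {a..b}" if "i \<in> S" for i
    using assms(2,4) that by (intro emeasure_mono) auto
  then have "emeasure lborel (J i) \<noteq> \<infinity>" if "i \<in> S" for i
    using that assms(5) by (metis emeasure_lborel_Icc ennreal_neq_top infinity_ennreal_def top.extremum_uniqueI)
  then have "(\<Sum>i\<in>S. measure lborel (J i)) = measure lborel (\<Union>i\<in>S. J i)"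
    using assms by (intro measure_finite_Union[symmetric]) auto
  also have "\<dots> \<le> measure lborel {a..b}"
    using assms by (intro measure_mono_fmeasurable fmeasurable_compact) auto
  finally show ?thesis using assms(5) by simp
qed

lemma grid_point_in_middle_half:
  fixes y h :: real and N :: nat
  assumes y: "0 \<le> y" "y + h \<le> 1" and h: "2 < N * h"
  obtains j where "j \<le> N" "h \<le> 4 * (j / N - y)" "h \<le> 4 * (y + h - j / N)"
proof -
  have N: "0 < real N" using h y by (cases "N = 0") auto
  have "0 < real N * h" using h by simp
  then have "0 < h" using N by (simp add: zero_less_mult_iff)
  define z where "z = (y + h / 4) * N"
  have "0 \<le> z" using N y \<open>0 < h\<close> by (simp add: z_def)
  then have "z \<le> nat \<lceil>z\<rceil>" "nat \<lceil>z\<rceil> < z + 1" by linarith+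
  then have j: "y + h / 4 \<le> nat \<lceil>z\<rceil> / N" "nat \<lceil>z\<rceil> / N < y + h / 4 + 1 / N"
    using N by (auto simp: z_def field_simps)
  moreover have "1 / N < h / 2" using N h by (simp add: field_simps)
  ultimately have "h \<le> 4 * (nat \<lceil>z\<rceil> / N - y)" "h \<le> 4 * (y + h - nat \<lceil>z\<rceil> / N)" by auto
  moreover from this(2) have "real (nat \<lceil>z\<rceil>) / N \<le> 1" using y \<open>0 < h\<close> by argo
  then have "real (nat \<lceil>z\<rceil>) \<le> real N" using N by (simp add: divide_le_eq)
  then have "nat \<lceil>z\<rceil> \<le> N" by (simp only: of_nat_le_iff)
  ultimately show thesis using that by blast
qed

context
  fixes I t assumes I: "admissible_instance I" and t: "valid_placement I t"
begin

lemma placed_in_strip: "i < length I \<Longrightarrow> translate (t i) (I ! i) \<subseteq> strip"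
  using t by (simp add: valid_placement_def)

lemma placed_fst_bounds:
  assumes "i < length I" "q \<in> translate (t i) (I ! i)"
  shows "0 \<le> fst q" "fst q \<le> packing_cost I t"
  using placed_in_strip assms fst_le_packing_cost[OF I] by (auto simp: strip_def)

lemma packing_cost_nonneg:
  assumes "I \<noteq> []" shows "0 \<le> packing_cost I t"
proof -
  obtain p where "p \<in> I ! 0" using piece.nonempty[OF admissible_piece[OF I]] assms by fastforce
  then have "p + t 0 \<in> translate (t 0) (I ! 0)" by (rule mem_translate)
  then show ?thesis using placed_fst_bounds[of 0] assms by fastforce
qed

lemma width_le_packing_cost:
  assumes i: "i < length I"
  shows "width (I ! i) \<le> packing_cost I t"
proof -
  interpret piece "I ! i" using admissible_piece[OF I i] .
  have c: "compact (translate (t i) (I ! i))" "translate (t i) (I ! i) \<noteq> {}"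
    using compact_translate[OF compact] nonempty by (auto simp: translate_def)
  obtain p where p: "p \<in> translate (t i) (I ! i)" "fst p = min_on fst (translate (t i) (I ! i))"
    using min_on_attained[OF linear_fst c] .
  obtain q where q: "q \<in> translate (t i) (I ! i)" "fst q = max_on fst (translate (t i) (I ! i))"
    using max_on_attained[OF linear_fst c] .
  have "width (I ! i) = fst q - fst p"
    using extent_translate[OF linear_fst compact nonempty, of "t i"] p(2) q(2) by (simp add: extent_def)
  then show ?thesis using placed_fst_bounds[OF i p(1)] placed_fst_bounds[OF i q(1)] by linarith
qed

lemma grid_line_chord:
  assumes i: "i < length I" and h: "1 / 2 ^ (k + 1) < height (I ! i)"
  obtains j :: nat where "j \<le> 4 * 2 ^ k"
    "skew_width (I ! i) / 4 \<le> measure lborel {x. (x, j / (4 * 2 ^ k)) \<in> interior (translate (t i) (I ! i))}"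
proof -
  interpret piece "I ! i" using admissible_piece[OF I i] .
  define Q where "Q = translate (t i) (I ! i)"
  note translate = min_on_translate max_on_translate extent_translate
  note translate_snd = translate[OF linear_snd compact nonempty, of "t i", folded Q_def]
  have BT: "bottom_point (I ! i) + t i \<in> Q" "top_point (I ! i) + t i \<in> Q"
    using bottom_point top_point by (auto simp: Q_def mem_translate)
  then have "0 \<le> min_on snd Q" "max_on snd Q \<le> 1"
    using translate_snd bottom_point top_point placed_in_strip[OF i] by (force simp: Q_def strip_def)+
  then have y: "0 \<le> min_on snd Q" "min_on snd Q + height Q \<le> 1" by (simp_all add: extent_def)
  have "2 < real (4 * 2 ^ k) * height Q" using h translate_snd by (simp add: field_simps)
  from grid_point_in_middle_half[OF y this]
  obtain j :: nat where j: "j \<le> 4 * 2 ^ k" and l: "height Q \<le> 4 * (j / real (4 * 2 ^ k) - min_on snd Q)"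
    "height Q \<le> 4 * (min_on snd Q + height Q - j / real (4 * 2 ^ k))" .
  have "(fst (top_point (I ! i) + t i) - fst (bottom_point (I ! i) + t i)) / height Q = slope (I ! i)"
    using translate_snd by (simp add: slope_def)
  moreover have "extent (shear s) Q = extent (shear s) (I ! i)" for s
    unfolding Q_def by (rule translate(3)[OF linear_shear compact nonempty])
  ultimately have "skew_width (I ! i) / 4 \<le> measure lborel {x. (x, j / real (4 * 2 ^ k)) \<in> interior Q}"
    using chord_measure_ge[of Q, OF _ _ BT _ _ _ l(1)] l(2) compact_translate[OF compact]
      convex_translate[OF convex] bottom_point top_point translate_snd height_pos
    by (simp add: Q_def skew_width_def extent_def)
  then show thesis using that j by (simp add: Q_def)
qed

lemma sum_chords_le_packing_cost:
  assumes ne: "I \<noteq> []" and A: "A \<subseteq> {..<length I}"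
  shows "(\<Sum>i\<in>A. measure lborel {x. (x, l) \<in> interior (translate (t i) (I ! i))}) \<le> packing_cost I t"
proof -
  have "(\<Sum>i\<in>A. measure lborel {x. (x, l) \<in> interior (translate (t i) (I ! i))}) \<le> packing_cost I t - 0"
  proof (rule sum_measure_disjoint_le)
    show "finite A" using A finite_subset by blast
    show "{x. (x, l) \<in> interior (translate (t i) (I ! i))} \<in> sets lborel" for i
    proof -
      have "{x. (x, l) \<in> interior (translate (t i) (I ! i))} = (\<lambda>x. (x, l)) -` interior (translate (t i) (I ! i))"
        by auto
      then show ?thesis by (auto intro!: borel_open continuous_open_vimage continuous_intros)
    qed
    have "interior (translate (t i) (I ! i)) \<inter> interior (translate (t j) (I ! j)) = {}"
      if "i \<in> A" "j \<in> A" "i \<noteq> j" for i j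
    proof -
      have "i < length I" "j < length I" using that A by auto
      then show ?thesis using t \<open>i \<noteq> j\<close> by (simp add: valid_placement_def)
    qed
    then show "disjoint_family_on (\<lambda>i. {x. (x, l) \<in> interior (translate (t i) (I ! i))}) A"
      unfolding disjoint_family_on_def by blast
    show "{x. (x, l) \<in> interior (translate (t i) (I ! i))} \<subseteq> {0..packing_cost I t}" if "i \<in> A" for i
    proof
      fix x assume "x \<in> {x. (x, l) \<in> interior (translate (t i) (I ! i))}"
      then have "(x, l) \<in> translate (t i) (I ! i)" using interior_subset by auto
      then show "x \<in> {0..packing_cost I t}" using placed_fst_bounds[of i] that A by auto
    qed
  qed (use packing_cost_nonneg[OF ne] in simp)
  then show ?thesis by simp
qed

text \<open>Every piece counted below has a chord on one of \<open>4 \<cdot> 2^k + 1\<close> grid lines.\<close>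

lemma sum_skew_width_le_packing_cost:
  assumes ne: "I \<noteq> []"
  shows "(\<Sum>i | i < length I \<and> 1 / 2 ^ (k + 1) < height (I ! i). skew_width (I ! i))
           \<le> 4 * (4 * 2 ^ k + 1) * packing_cost I t"
proof -
  define N :: nat where "N = 4 * 2 ^ k"
  define S where "S = {i. i < length I \<and> 1 / 2 ^ (k + 1) < height (I ! i)}"
  define J where "J i l = {x. (x, l) \<in> interior (translate (t i) (I ! i))}" for i l
  have "\<forall>i\<in>S. \<exists>j. j \<le> N \<and> skew_width (I ! i) / 4 \<le> measure lborel (J i (j / N))"
  proof
    fix i assume "i \<in> S"
    then have i: "i < length I" "1 / 2 ^ (k + 1) < height (I ! i)" by (simp_all add: S_def)
    obtain j :: nat where "j \<le> 4 * 2 ^ k"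
      "skew_width (I ! i) / 4 \<le> measure lborel {x. (x, j / (4 * 2 ^ k)) \<in> interior (translate (t i) (I ! i))}"
      using grid_line_chord[OF i] .
    then show "\<exists>j. j \<le> N \<and> skew_width (I ! i) / 4 \<le> measure lborel (J i (j / N))"
      by (intro exI[of _ j]) (simp add: N_def J_def)
  qed
  then obtain m where m: "\<forall>i\<in>S. m i \<le> N \<and> skew_width (I ! i) / 4 \<le> measure lborel (J i (m i / N))"
    by (metis bchoice)
  have "(\<Sum>i\<in>S. skew_width (I ! i)) \<le> (\<Sum>i\<in>S. 4 * measure lborel (J i (m i / N)))"
    using m by (intro sum_mono) auto
  also have "\<dots> = 4 * (\<Sum>j\<le>N. \<Sum>i | i \<in> S \<and> m i = j. measure lborel (J i (m i / N)))"
    using m by (subst sum.group[of S "{..N}" m, symmetric]) (auto simp: S_def sum_distrib_left)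
  also have "\<dots> = 4 * (\<Sum>j\<le>N. \<Sum>i | i \<in> S \<and> m i = j. measure lborel (J i (j / N)))"
    by (intro arg_cong[where f = "(*) 4"] sum.cong refl) auto
  also have "\<dots> \<le> 4 * (\<Sum>j\<le>N. packing_cost I t)"
  proof (intro mult_left_mono sum_mono)
    fix j
    show "(\<Sum>i | i \<in> S \<and> m i = j. measure lborel (J i (j / N))) \<le> packing_cost I t"
      unfolding J_def by (rule sum_chords_le_packing_cost[OF ne]) (auto simp: S_def)
  qed simp
  finally show ?thesis by (simp add: S_def N_def algebra_simps)
qed

end

lemma le_OPT:
  assumes "\<exists>t. valid_placement I t" "\<And>t. valid_placement I t \<Longrightarrow> B \<le> packing_cost I t"
  shows "B \<le> OPT I"
  unfolding OPT_def using assms by (intro cInf_greatest) auto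

section \<open>Classes of pieces\<close>

text \<open>Pieces are indexed from \<open>0\<close>; \<open>2 ^ level i\<close> is about \<open>\<surd>(i + 1)\<close>.\<close>

definition level :: "nat \<Rightarrow> nat" where
  "level i = (LEAST a. i + 1 \<le> 4 ^ a)"

definition width_exp :: "point set \<Rightarrow> int" where
  "width_exp P = \<lceil>log 2 (width P)\<rceil>"

definition height_exp :: "point set \<Rightarrow> nat" where
  "height_exp P = nat \<lfloor>- log 2 (height P)\<rfloor>"

text \<open>
  A class fixes the level, the width \<open>2^e\<close> rounded up to a power of two, the row height
  \<open>2^-k\<close> and the slope \<open>j \<cdot> 2^(e-a) \<cdot> 2^k\<close> of the rows; pieces of one class share bins.\<close>

datatype bin_class = Class (cl_level: nat) (cl_width_exp: int) (cl_row_exp: nat) (cl_slope_index: int)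

definition unit_width :: "bin_class \<Rightarrow> real" where
  "unit_width \<kappa> = 2 powr cl_width_exp \<kappa>"

definition row_height :: "bin_class \<Rightarrow> real" where
  "row_height \<kappa> = 1 / 2 ^ cl_row_exp \<kappa>"

definition rows :: "bin_class \<Rightarrow> nat" where
  "rows \<kappa> = 2 ^ cl_row_exp \<kappa>"

definition granularity :: "bin_class \<Rightarrow> real" where
  "granularity \<kappa> = unit_width \<kappa> / 2 ^ cl_level \<kappa>"

definition class_slope :: "bin_class \<Rightarrow> real" where
  "class_slope \<kappa> = cl_slope_index \<kappa> * granularity \<kappa> / row_height \<kappa>"

definition margin :: "bin_class \<Rightarrow> real" where
  "margin \<kappa> = 3 * unit_width \<kappa>"

definition capacity :: "bin_class \<Rightarrow> real" where
  "capacity \<kappa> = 6 * unit_width \<kappa>"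

definition bin_width :: "bin_class \<Rightarrow> real" where
  "bin_width \<kappa> = 12 * unit_width \<kappa>"

text \<open>
  Pieces that are flat compared with their level (\<open>2 * level i \<le> height_exp P\<close>) go into rows of
  height \<open>4^-level i\<close> with slope \<open>0\<close>; the others into rows of height \<open>2^-height_exp P\<close> whose slope
  approximates their own slope.\<close>

definition row_exp :: "nat \<Rightarrow> point set \<Rightarrow> nat" where
  "row_exp i P = min (height_exp P) (2 * level i)"

definition slope_index :: "nat \<Rightarrow> point set \<Rightarrow> int" where
  "slope_index i P = (if 2 * level i \<le> height_exp P then 0
     else round (slope P * 2 ^ level i / (2 ^ height_exp P * 2 powr width_exp P)))"

definition classify :: "nat \<Rightarrow> point set \<Rightarrow> bin_class" where
  "classify i P = Class (level i) (width_exp P) (row_exp i P) (slope_index i P)"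

text \<open>The length a piece occupies in a row of its class.\<close>

definition row_length :: "nat \<Rightarrow> point set \<Rightarrow> real" where
  "row_length i P = extent (shear (class_slope (classify i P))) P"

lemma unit_width_pos: "0 < unit_width \<kappa>"
  by (simp add: unit_width_def)

lemma row_height_pos: "0 < row_height \<kappa>"
  by (simp add: row_height_def)

lemma rows_row_height: "real (rows \<kappa>) * row_height \<kappa> = 1"
  by (simp add: rows_def row_height_def)

lemma bin_width_eq: "bin_width \<kappa> = capacity \<kappa> + 2 * margin \<kappa>"
  by (simp add: bin_width_def capacity_def margin_def)

lemma level_bounds: "i + 1 \<le> 4 ^ level i" "0 < level i \<Longrightarrow> 4 ^ (level i - 1) < i + 1"
proof -
  have "\<exists>a. i + 1 \<le> 4 ^ a" by (intro exI[of _ "i + 1"]) (induct i, auto)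
  then show "i + 1 \<le> 4 ^ level i" unfolding level_def by (rule LeastI_ex)
  show "4 ^ (level i - 1) < i + 1" if "0 < level i"
    using not_less_Least[of "level i - 1" "\<lambda>a. i + 1 \<le> 4 ^ a"] that unfolding level_def by simp
qed

lemma level_mono: "i \<le> j \<Longrightarrow> level i \<le> level j"
  unfolding level_def[of i] using level_bounds(1)[of j] by (intro Least_le) simp

lemma sqrt_le_two_power_level: "sqrt (real i + 1) \<le> 2 ^ level i"
proof -
  have "real (i + 1) \<le> real (4 ^ level i)" using level_bounds(1)[of i] by (simp only: of_nat_le_iff)
  then have "real i + 1 \<le> 4 ^ level i" by simp
  also have "(4::real) ^ level i = (2 ^ level i)\<^sup>2" by (simp flip: power_mult power_mult_distrib add: power2_eq_square)
  finally show ?thesis by (simp add: real_le_lsqrt)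
qed

context piece
begin

lemma width_exp_bounds: "width P \<le> 2 powr width_exp P" "2 powr width_exp P < 2 * width P"
proof -
  have w: "2 powr log 2 (width P) = width P" using width_pos by simp
  have "log 2 (width P) \<le> width_exp P" "width_exp P < log 2 (width P) + 1"
    unfolding width_exp_def by linarith+
  then have "2 powr log 2 (width P) \<le> 2 powr width_exp P" "2 powr width_exp P < 2 powr (log 2 (width P) + 1)"
    by (auto intro: powr_mono powr_less_mono)
  then show "width P \<le> 2 powr width_exp P" "2 powr width_exp P < 2 * width P"
    using w by (simp_all add: powr_add)
qed

lemma height_exp_bounds: "height P \<le> 1 / 2 ^ height_exp P" "1 / 2 ^ (height_exp P + 1) < height P"
proof -
  define f where "f = - log 2 (height P)"
  have "0 \<le> f" unfolding f_def using height_pos height_le_1 by simp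
  then have k: "real (height_exp P) = \<lfloor>f\<rfloor>" unfolding height_exp_def f_def[symmetric] by simp
  have hf: "2 powr f = 1 / height P" unfolding f_def using height_pos by (simp add: powr_minus divide_inverse)
  have "2 powr real (height_exp P) \<le> 2 powr f" "2 powr f < 2 powr (real (height_exp P) + 1)"
    using k by (auto intro: powr_mono powr_less_mono)
  then have "2 ^ height_exp P \<le> 1 / height P" "1 / height P < 2 ^ (height_exp P + 1)"
    using hf by (simp_all add: powr_realpow powr_add)
  then show "height P \<le> 1 / 2 ^ height_exp P" "1 / 2 ^ (height_exp P + 1) < height P"
    using height_pos by (simp_all add: field_simps)
qed

lemma height_le_row_height: "height P \<le> row_height (classify i P)"
proof -
  have "(2::real) ^ row_exp i P \<le> 2 ^ height_exp P" unfolding row_exp_def by (intro power_increasing) auto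
  then have "1 / 2 ^ height_exp P \<le> 1 / (2::real) ^ row_exp i P" by (intro divide_left_mono) auto
  then show ?thesis using height_exp_bounds(1) by (simp add: row_height_def classify_def)
qed

lemma row_length_nonneg: "0 \<le> row_length i P"
  unfolding row_length_def by (rule extent_nonneg[OF linear_shear compact nonempty])

lemma row_length_flat:
  "2 * level i \<le> height_exp P \<Longrightarrow> row_length i P = width P"
  by (simp add: row_length_def classify_def class_slope_def slope_index_def)

lemma steep_class:
  assumes "height_exp P < 2 * level i"
  defines "\<kappa> \<equiv> classify i P"
  shows "row_height \<kappa> < 2 * height P"
    and "\<bar>class_slope \<kappa> - slope P\<bar> * row_height \<kappa> \<le> granularity \<kappa> / 2"
    and "\<bar>slope P\<bar> * row_height \<kappa> \<le> 2 * width P"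
proof -
  have k: "cl_row_exp \<kappa> = height_exp P" using assms by (simp add: \<kappa>_def classify_def row_exp_def)
  then show H: "row_height \<kappa> < 2 * height P"
    using height_exp_bounds(2) by (simp add: row_height_def field_simps)
  define z where "z = slope P * row_height \<kappa> / granularity \<kappa>"
  have g: "0 < granularity \<kappa>" by (simp add: granularity_def unit_width_pos)
  have "cl_slope_index \<kappa> = round z"
    using assms k by (simp add: \<kappa>_def classify_def slope_index_def z_def granularity_def
        unit_width_def row_height_def field_simps)
  then have "\<bar>cl_slope_index \<kappa> - z\<bar> \<le> 1 / 2" using of_int_round_abs_le[of z] by simp
  have "(class_slope \<kappa> - slope P) * row_height \<kappa> = (cl_slope_index \<kappa> - z) * granularity \<kappa>"
    using g row_height_pos[of \<kappa>] by (simp add: class_slope_def z_def field_simps)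
  then have "\<bar>(class_slope \<kappa> - slope P) * row_height \<kappa>\<bar> = \<bar>(cl_slope_index \<kappa> - z) * granularity \<kappa>\<bar>"
    by (rule arg_cong)
  then have "\<bar>class_slope \<kappa> - slope P\<bar> * row_height \<kappa> = \<bar>cl_slope_index \<kappa> - z\<bar> * granularity \<kappa>"
    using g row_height_pos[of \<kappa>] by (simp add: abs_mult)
  also have "\<dots> \<le> 1 / 2 * granularity \<kappa>"
    using \<open>\<bar>cl_slope_index \<kappa> - z\<bar> \<le> 1 / 2\<close> g by (intro mult_right_mono) auto
  finally show "\<bar>class_slope \<kappa> - slope P\<bar> * row_height \<kappa> \<le> granularity \<kappa> / 2" by simp
  have "\<bar>slope P\<bar> * row_height \<kappa> \<le> \<bar>slope P\<bar> * (2 * height P)"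
    using H by (intro mult_left_mono) auto
  then show "\<bar>slope P\<bar> * row_height \<kappa> \<le> 2 * width P" using abs_slope_height_le_width by linarith
qed

lemma row_length_steep:
  assumes "height_exp P < 2 * level i"
  shows "row_length i P \<le> skew_width P + granularity (classify i P) / 2"
proof -
  have "\<bar>class_slope (classify i P) - slope P\<bar> * height P \<le> granularity (classify i P) / 2"
    using steep_class(2)[OF assms] height_le_row_height[of i]
    by (smt (verit) abs_ge_zero mult_left_mono)
  then show ?thesis
    using extent_shear_le[OF compact nonempty, of "class_slope (classify i P)" "slope P"]
    by (simp add: row_length_def skew_width_def)
qed

lemma margin_capacity_bounds:
  "\<bar>class_slope (classify i P)\<bar> * row_height (classify i P) \<le> margin (classify i P)"
  "row_length i P \<le> capacity (classify i P) / 2"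
proof -
  define \<kappa> where "\<kappa> = classify i P"
  have u: "width P \<le> unit_width \<kappa>" "granularity \<kappa> \<le> unit_width \<kappa>"
    using width_exp_bounds(1) unit_width_pos[of \<kappa>]
    by (simp_all add: \<kappa>_def classify_def unit_width_def granularity_def field_simps)
  have "\<bar>class_slope \<kappa>\<bar> * row_height \<kappa> \<le> margin \<kappa> \<and> row_length i P \<le> capacity \<kappa> / 2"
  proof (cases "2 * level i \<le> height_exp P")
    case True
    then show ?thesis using row_length_flat u unit_width_pos[of \<kappa>]
      by (simp add: \<kappa>_def classify_def class_slope_def slope_index_def margin_def capacity_def)
  next
    case False
    then have steep: "height_exp P < 2 * level i" by simp
    have "\<bar>class_slope \<kappa>\<bar> * row_height \<kappa>
        \<le> \<bar>slope P\<bar> * row_height \<kappa> + \<bar>class_slope \<kappa> - slope P\<bar> * row_height \<kappa>"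
      by (metis abs_triangle_ineq2 add.commute diff_le_eq distrib_right mult_right_mono
          row_height_pos less_imp_le)
    then have "\<bar>class_slope \<kappa>\<bar> * row_height \<kappa> \<le> 2 * width P + granularity \<kappa> / 2"
      using steep_class[OF steep] unfolding \<kappa>_def by linarith
    moreover have "row_length i P \<le> 2 * width P + granularity \<kappa> / 2"
      using row_length_steep[OF steep] skew_width_le_width unfolding \<kappa>_def by linarith
    ultimately show ?thesis using u unit_width_pos[of \<kappa>] unfolding margin_def capacity_def
      by (intro conjI; linarith)
  qed
  then show "\<bar>class_slope (classify i P)\<bar> * row_height (classify i P) \<le> margin (classify i P)"
    "row_length i P \<le> capacity (classify i P) / 2" by (simp_all add: \<kappa>_def)
qed

end

section \<open>The packing algorithm\<close>

text \<open>
  A bin of class \<open>\<kappa>\<close> at \<open>X\<close> occupies \<open>[X, X + bin_width \<kappa>] \<times> [0, 1]\<close> and is cut into \<open>rows \<kappa>\<close> rows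
  of height \<open>row_height \<kappa>\<close>; a slot is a bin, a row and an offset in \<open>[0, capacity \<kappa>]\<close> along it.
  The packer keeps, for each class, a cursor (the first free slot of its current bin) and the
  front, where the next bin opens.\<close>

datatype slot = Slot (bin_x: real) (row: nat) (offset: real)

record packer =
  front :: real
  cursor :: "bin_class \<Rightarrow> slot option"

definition advance :: "slot \<Rightarrow> real \<Rightarrow> slot" where
  "advance c D = Slot (bin_x c) (row c) (offset c + D)"

fun next_slot :: "bin_class \<Rightarrow> real \<Rightarrow> slot option \<Rightarrow> slot option" where
  "next_slot \<kappa> D None = None"
| "next_slot \<kappa> D (Some (Slot X r u)) =
     (if u + D \<le> capacity \<kappa> then Some (Slot X r u)
      else if Suc r < rows \<kappa> then Some (Slot X (Suc r) 0) else None)"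

definition pack :: "bin_class \<Rightarrow> real \<Rightarrow> packer \<Rightarrow> slot \<times> packer" where
  "pack \<kappa> D \<sigma> =
     (case next_slot \<kappa> D (cursor \<sigma> \<kappa>) of
        Some c \<Rightarrow> (c, \<sigma>\<lparr>cursor := (cursor \<sigma>)(\<kappa> \<mapsto> advance c D)\<rparr>)
      | None \<Rightarrow> (Slot (front \<sigma>) 0 0,
                 \<lparr>front = front \<sigma> + bin_width \<kappa>,
                  cursor = (cursor \<sigma>)(\<kappa> \<mapsto> advance (Slot (front \<sigma>) 0 0) D)\<rparr>))"

definition packer_init :: packer where
  "packer_init = \<lparr>front = 0, cursor = Map.empty\<rparr>"

definition pack_piece :: "nat \<Rightarrow> point set \<Rightarrow> packer \<Rightarrow> slot \<times> packer" where
  "pack_piece i P = pack (classify i P) (row_length i P)"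

definition run :: "point set list \<Rightarrow> packer" where
  "run ps = foldl (\<lambda>\<sigma> (i, P). snd (pack_piece i P \<sigma>)) packer_init (zip [0..<length ps] ps)"

text \<open>
  The translation that puts a piece into a slot: its lowest point on the bottom of the row and its
  extent in the direction of the rows starting \<open>margin\<close> after the slot's offset.\<close>

definition place :: "nat \<Rightarrow> point set \<Rightarrow> slot \<Rightarrow> point" where
  "place i P c = (let \<kappa> = classify i P; s = class_slope \<kappa> in
     (bin_x c + margin \<kappa> + offset c - min_on (shear s) P - s * min_on snd P,
      row c * row_height \<kappa> - min_on snd P))"

definition alg :: online_alg where
  "alg ps = (let i = length ps - 1; P = last ps in place i P (fst (pack_piece i P (run (butlast ps)))))"

definition slot_of :: "point set list \<Rightarrow> nat \<Rightarrow> slot" where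
  "slot_of ps i = fst (pack_piece i (ps ! i) (run (take i ps)))"

lemma run_take_Suc:
  "i < length ps \<Longrightarrow> run (take (Suc i) ps) = snd (pack_piece i (ps ! i) (run (take i ps)))"
  by (simp add: run_def take_Suc_conv_app_nth)

lemma alg_placement_eq: "i < length ps \<Longrightarrow> alg_placement alg ps i = place i (ps ! i) (slot_of ps i)"
  by (simp add: alg_placement_def alg_def slot_of_def take_Suc_conv_app_nth Let_def)

section \<open>Invariants of the packer\<close>

definition bins_apart :: "bin_class \<Rightarrow> real \<Rightarrow> bin_class \<Rightarrow> real \<Rightarrow> bool" where
  "bins_apart \<kappa> X \<kappa>' X' \<longleftrightarrow> X + bin_width \<kappa> \<le> X' \<or> X' + bin_width \<kappa>' \<le> X"

definition slot_fits :: "bin_class \<Rightarrow> real \<Rightarrow> real \<Rightarrow> slot \<Rightarrow> bool" where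
  "slot_fits \<kappa> F D c \<longleftrightarrow> 0 \<le> bin_x c \<and> bin_x c + bin_width \<kappa> \<le> F \<and> row c < rows \<kappa> \<and>
     0 \<le> offset c \<and> offset c + D \<le> capacity \<kappa>"

definition slots_apart :: "bin_class \<Rightarrow> real \<Rightarrow> slot \<Rightarrow> bin_class \<Rightarrow> real \<Rightarrow> slot \<Rightarrow> bool" where
  "slots_apart \<kappa> D c \<kappa>' D' c' \<longleftrightarrow> bins_apart \<kappa> (bin_x c) \<kappa>' (bin_x c') \<or>
     \<kappa> = \<kappa>' \<and> bin_x c = bin_x c' \<and> (row c \<noteq> row c' \<or> offset c + D \<le> offset c' \<or> offset c' + D' \<le> offset c)"

definition precedes :: "bin_class \<Rightarrow> real \<Rightarrow> slot \<Rightarrow> bin_class \<Rightarrow> slot \<Rightarrow> bool" where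
  "precedes \<kappa> D c \<kappa>' e \<longleftrightarrow> bins_apart \<kappa> (bin_x c) \<kappa>' (bin_x e) \<or>
     \<kappa> = \<kappa>' \<and> bin_x c = bin_x e \<and> (row c < row e \<or> row c = row e \<and> offset c + D \<le> offset e)"

definition layout_invariant ::
    "nat \<Rightarrow> (nat \<Rightarrow> bin_class) \<Rightarrow> (nat \<Rightarrow> real) \<Rightarrow> (nat \<Rightarrow> slot) \<Rightarrow> packer \<Rightarrow> bool" where
  "layout_invariant m \<kappa> D c \<sigma> \<longleftrightarrow>
     0 \<le> front \<sigma> \<and> dom (cursor \<sigma>) = \<kappa> ` {..<m} \<and>
     (\<forall>i<m. slot_fits (\<kappa> i) (front \<sigma>) (D i) (c i)) \<and>
     (\<forall>i<m. \<forall>j<m. i \<noteq> j \<longrightarrow> slots_apart (\<kappa> i) (D i) (c i) (\<kappa> j) (D j) (c j)) \<and>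
     (\<forall>\<mu> e. cursor \<sigma> \<mu> = Some e \<longrightarrow>
        slot_fits \<mu> (front \<sigma>) 0 e \<and> (\<forall>i<m. precedes (\<kappa> i) (D i) (c i) \<mu> e)) \<and>
     (\<forall>\<mu> \<nu> e e'. \<mu> \<noteq> \<nu> \<longrightarrow> cursor \<sigma> \<mu> = Some e \<longrightarrow> cursor \<sigma> \<nu> = Some e' \<longrightarrow>
        bins_apart \<mu> (bin_x e) \<nu> (bin_x e'))"

lemma bin_width_pos: "0 < bin_width \<kappa>"
  by (simp add: bin_width_def unit_width_pos)

lemma capacity_pos: "0 < capacity \<kappa>"
  by (simp add: capacity_def unit_width_pos)

lemma rows_pos: "0 < rows \<kappa>"
  by (simp add: rows_def)

lemma slot_fits_mono: "slot_fits \<kappa> F D c \<Longrightarrow> F \<le> F' \<Longrightarrow> slot_fits \<kappa> F' D c"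
  by (auto simp: slot_fits_def)

lemma slot_fits_bin_end: "slot_fits \<kappa> F D c \<Longrightarrow> bin_x c + bin_width \<kappa> \<le> F"
  by (simp add: slot_fits_def)

lemma slots_apart_sym: "slots_apart \<kappa> D c \<kappa>' D' c' \<Longrightarrow> slots_apart \<kappa>' D' c' \<kappa> D c"
  by (auto simp: slots_apart_def bins_apart_def)

definition at_or_after :: "slot \<Rightarrow> slot \<Rightarrow> bool" where
  "at_or_after e c \<longleftrightarrow> bin_x c = bin_x e \<and> (row e < row c \<or> row e = row c \<and> offset e \<le> offset c)"

lemma precedes_at_or_after:
  assumes "precedes \<kappa> D c \<mu> e" "at_or_after e c'" "0 \<le> D'"
  shows "slots_apart \<kappa> D c \<mu> D' c'" "precedes \<kappa> D c \<mu> (advance c' D')"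
  using assms by (auto simp: precedes_def at_or_after_def slots_apart_def advance_def)

lemma pack_cases:
  assumes pk: "pack \<mu> D \<sigma> = (c, \<sigma>')"
    and cur: "\<And>e. cursor \<sigma> \<mu> = Some e \<Longrightarrow> slot_fits \<mu> (front \<sigma>) 0 e"
    and D: "0 \<le> D" "D \<le> capacity \<mu> / 2"
  obtains (fresh) "c = Slot (front \<sigma>) 0 0" "front \<sigma>' = front \<sigma> + bin_width \<mu>"
      "cursor \<sigma>' = (cursor \<sigma>)(\<mu> \<mapsto> advance c D)"
  | (reuse) e where "cursor \<sigma> \<mu> = Some e" "at_or_after e c" "slot_fits \<mu> (front \<sigma>) D c"
      "front \<sigma>' = front \<sigma>" "cursor \<sigma>' = (cursor \<sigma>)(\<mu> \<mapsto> advance c D)"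
proof (cases "next_slot \<mu> D (cursor \<sigma> \<mu>)")
  case None
  then have "c = Slot (front \<sigma>) 0 0"
    "\<sigma>' = \<lparr>front = front \<sigma> + bin_width \<mu>, cursor = (cursor \<sigma>)(\<mu> \<mapsto> advance c D)\<rparr>"
    using pk by (auto simp: pack_def)
  then show thesis using fresh by simp
next
  case (Some c')
  then obtain e where e: "cursor \<sigma> \<mu> = Some e"
    by (cases "cursor \<sigma> \<mu>") auto
  obtain X r u where Xru: "e = Slot X r u" by (cases e)
  have c: "c = c'" "front \<sigma>' = front \<sigma>" "cursor \<sigma>' = (cursor \<sigma>)(\<mu> \<mapsto> advance c D)"
    using pk Some by (auto simp: pack_def)
  have "slot_fits \<mu> (front \<sigma>) 0 e" using cur e .
  then have "at_or_after e c \<and> slot_fits \<mu> (front \<sigma>) D c"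
    using Some e c D by (auto simp: Xru at_or_after_def slot_fits_def split: if_splits)
  then show thesis using reuse e c by blast
qed

lemma slot_fits_advance: "slot_fits \<kappa> F D c \<Longrightarrow> 0 \<le> D \<Longrightarrow> slot_fits \<kappa> F 0 (advance c D)"
  by (simp add: slot_fits_def advance_def)

lemma precedes_advance: "precedes \<kappa> D c \<kappa> (advance c D)"
  by (simp add: precedes_def advance_def)

lemma layout_invariantD:
  assumes "layout_invariant m \<kappa> D c \<sigma>"
  shows "0 \<le> front \<sigma>" "dom (cursor \<sigma>) = \<kappa> ` {..<m}"
    "\<And>i. i < m \<Longrightarrow> slot_fits (\<kappa> i) (front \<sigma>) (D i) (c i)"
    "\<And>i j. i < m \<Longrightarrow> j < m \<Longrightarrow> i \<noteq> j \<Longrightarrow> slots_apart (\<kappa> i) (D i) (c i) (\<kappa> j) (D j) (c j)"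
    "\<And>\<mu> e. cursor \<sigma> \<mu> = Some e \<Longrightarrow> slot_fits \<mu> (front \<sigma>) 0 e"
    "\<And>\<mu> e i. cursor \<sigma> \<mu> = Some e \<Longrightarrow> i < m \<Longrightarrow> precedes (\<kappa> i) (D i) (c i) \<mu> e"
    "\<And>\<mu> \<nu> e e'. \<mu> \<noteq> \<nu> \<Longrightarrow> cursor \<sigma> \<mu> = Some e \<Longrightarrow> cursor \<sigma> \<nu> = Some e' \<Longrightarrow>
        bins_apart \<mu> (bin_x e) \<nu> (bin_x e')"
  using assms unfolding layout_invariant_def by simp_all

lemma bins_apart_sym: "bins_apart \<kappa> X \<kappa>' X' \<Longrightarrow> bins_apart \<kappa>' X' \<kappa> X"
  by (auto simp: bins_apart_def)

lemma layout_invariant_Suc: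
  assumes inv: "layout_invariant m \<kappa> D c \<sigma>" and D: "0 \<le> D m"
    and front: "front \<sigma> \<le> front \<sigma>'" and cur': "cursor \<sigma>' = (cursor \<sigma>)(\<kappa> m \<mapsto> advance (c m) (D m))"
    and new: "slot_fits (\<kappa> m) (front \<sigma>') (D m) (c m)"
    and placed: "\<And>i. i < m \<Longrightarrow> slots_apart (\<kappa> i) (D i) (c i) (\<kappa> m) (D m) (c m) \<and>
      precedes (\<kappa> i) (D i) (c i) (\<kappa> m) (advance (c m) (D m))"
    and others: "\<And>\<nu> e. \<nu> \<noteq> \<kappa> m \<Longrightarrow> cursor \<sigma> \<nu> = Some e \<Longrightarrow> bins_apart (\<kappa> m) (bin_x (c m)) \<nu> (bin_x e)"
  shows "layout_invariant (Suc m) \<kappa> D c \<sigma>'"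
proof -
  note I = layout_invariantD[OF inv]
  have "bin_x (advance (c m) (D m)) = bin_x (c m)" by (simp add: advance_def)
  note others' = others[folded this]
  have S: "\<forall>i<Suc m. slot_fits (\<kappa> i) (front \<sigma>') (D i) (c i)"
    using I(3) slot_fits_mono[OF _ front] new by (auto simp: less_Suc_eq)
  have A: "\<forall>i<Suc m. \<forall>j<Suc m. i \<noteq> j \<longrightarrow> slots_apart (\<kappa> i) (D i) (c i) (\<kappa> j) (D j) (c j)"
    using I(4) placed slots_apart_sym by (auto simp: less_Suc_eq)
  have C: "slot_fits \<mu> (front \<sigma>') 0 e \<and> (\<forall>i<Suc m. precedes (\<kappa> i) (D i) (c i) \<mu> e)"
    if "cursor \<sigma>' \<mu> = Some e" for \<mu> e
  proof (cases "\<mu> = \<kappa> m")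
    case True
    then show ?thesis
      using that placed precedes_advance slot_fits_advance[OF new D] by (auto simp: cur' less_Suc_eq)
  next
    case False
    then have e: "cursor \<sigma> \<mu> = Some e" using that by (simp add: cur')
    then show ?thesis
      using I(5,6) slot_fits_mono[OF _ front] others[OF False e]
      by (auto simp: less_Suc_eq precedes_def)
  qed
  have B: "bins_apart \<mu> (bin_x e) \<nu> (bin_x e')"
    if "\<mu> \<noteq> \<nu>" "cursor \<sigma>' \<mu> = Some e" "cursor \<sigma>' \<nu> = Some e'" for \<mu> \<nu> e e'
    using that I(7) others' bins_apart_sym by (auto simp: cur' split: if_splits)
  have "dom (cursor \<sigma>') = \<kappa> ` {..<Suc m}" using I(2) by (auto simp: cur' lessThan_Suc)
  then show ?thesis unfolding layout_invariant_def using I(1) front S A C B by auto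
qed

lemma layout_invariant_pack:
  assumes inv: "layout_invariant m \<kappa> D c \<sigma>" and pk: "pack (\<kappa> m) (D m) \<sigma> = (c m, \<sigma>')"
    and D: "0 \<le> D m" "D m \<le> capacity (\<kappa> m) / 2"
  shows "layout_invariant (Suc m) \<kappa> D c \<sigma>'"
proof -
  note I = layout_invariantD[OF inv]
  show ?thesis
  proof (rule pack_cases[OF pk I(5) D])
    assume fresh: "c m = Slot (front \<sigma>) 0 0" "front \<sigma>' = front \<sigma> + bin_width (\<kappa> m)"
      "cursor \<sigma>' = (cursor \<sigma>)(\<kappa> m \<mapsto> advance (c m) (D m))"
    have left: "bins_apart \<mu> X (\<kappa> m) (bin_x (c m))" if "X + bin_width \<mu> \<le> front \<sigma>" for \<mu> X
      using that by (simp add: bins_apart_def fresh(1))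
    show ?thesis
    proof (rule layout_invariant_Suc[OF inv D(1) _ fresh(3)])
      show "front \<sigma> \<le> front \<sigma>'" using bin_width_pos[of "\<kappa> m"] by (simp add: fresh(2))
      show "slot_fits (\<kappa> m) (front \<sigma>') (D m) (c m)"
        using I(1) D capacity_pos[of "\<kappa> m"] rows_pos[of "\<kappa> m"] by (simp add: fresh slot_fits_def)
      show "slots_apart (\<kappa> i) (D i) (c i) (\<kappa> m) (D m) (c m) \<and>
          precedes (\<kappa> i) (D i) (c i) (\<kappa> m) (advance (c m) (D m))" if "i < m" for i
        using left[OF slot_fits_bin_end[OF I(3)[OF that]]] by (simp add: slots_apart_def precedes_def advance_def)
      show "bins_apart (\<kappa> m) (bin_x (c m)) \<nu> (bin_x e)" if "cursor \<sigma> \<nu> = Some e" for \<nu> e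
        using bins_apart_sym[OF left[OF slot_fits_bin_end[OF I(5)[OF that]]]] .
    qed
  next
    fix e assume reuse: "cursor \<sigma> (\<kappa> m) = Some e" "at_or_after e (c m)"
      "slot_fits (\<kappa> m) (front \<sigma>) (D m) (c m)"
      "front \<sigma>' = front \<sigma>" "cursor \<sigma>' = (cursor \<sigma>)(\<kappa> m \<mapsto> advance (c m) (D m))"
    show ?thesis
    proof (rule layout_invariant_Suc[OF inv D(1) _ reuse(5)])
      show "slots_apart (\<kappa> i) (D i) (c i) (\<kappa> m) (D m) (c m) \<and>
          precedes (\<kappa> i) (D i) (c i) (\<kappa> m) (advance (c m) (D m))" if "i < m" for i
        using precedes_at_or_after[OF I(6)[OF reuse(1) that] reuse(2) D(1)] by simp
      show "bins_apart (\<kappa> m) (bin_x (c m)) \<nu> (bin_x e')" if "\<nu> \<noteq> \<kappa> m" "cursor \<sigma> \<nu> = Some e'" for \<nu> e'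
        using I(7)[OF that(1)[symmetric] reuse(1) that(2)] reuse(2) by (simp add: at_or_after_def)
    qed (use reuse in simp_all)
  qed
qed

text \<open>
  Every piece is charged \<open>4 * row_height \<kappa> * D\<close>.  The fill of a cursor counts each completed row as
  half full; once all rows of a bin are more than half full its fill is at least \<open>bin_width \<kappa>\<close>,
  which pays for opening the next bin of the class.\<close>

definition fill :: "bin_class \<Rightarrow> slot \<Rightarrow> real" where
  "fill \<kappa> e = 4 * row_height \<kappa> * (row e * capacity \<kappa> / 2 + offset e)"

definition potential :: "packer \<Rightarrow> real" where
  "potential \<sigma> = (\<Sum>\<kappa>\<in>dom (cursor \<sigma>). fill \<kappa> (the (cursor \<sigma> \<kappa>)))"

definition budget_invariant :: "nat \<Rightarrow> (nat \<Rightarrow> bin_class) \<Rightarrow> (nat \<Rightarrow> real) \<Rightarrow> packer \<Rightarrow> bool" where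
  "budget_invariant m \<kappa> D \<sigma> \<longleftrightarrow>
     front \<sigma> + potential \<sigma> \<le> (\<Sum>\<mu>\<in>dom (cursor \<sigma>). bin_width \<mu>) + (\<Sum>i<m. 4 * row_height (\<kappa> i) * D i)"

lemma fill_advance: "fill \<kappa> (advance c D) = fill \<kappa> c + 4 * row_height \<kappa> * D"
  by (simp add: fill_def advance_def algebra_simps)

lemma fill_nonneg: "0 \<le> offset e \<Longrightarrow> 0 \<le> fill \<kappa> e"
  using row_height_pos[of \<kappa>] capacity_pos[of \<kappa>] by (simp add: fill_def)

lemma bin_width_le_fill:
  assumes "Suc r = rows \<mu>" "capacity \<mu> / 2 \<le> u"
  shows "bin_width \<mu> \<le> fill \<mu> (Slot X r u)"
proof -
  have "bin_width \<mu> = 4 * (real (rows \<mu>) * row_height \<mu>) * capacity \<mu> / 2"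
    by (simp add: rows_row_height bin_width_def capacity_def)
  also have "\<dots> = 4 * row_height \<mu> * (r * capacity \<mu> / 2 + capacity \<mu> / 2)"
    by (simp flip: assms(1) add: algebra_simps)
  also have "\<dots> \<le> fill \<mu> (Slot X r u)" using assms(2) row_height_pos[of \<mu>] by (simp add: fill_def)
  finally show ?thesis .
qed

lemma pack_amortized:
  assumes pk: "pack \<mu> D \<sigma> = (c, \<sigma>')"
    and cur: "\<And>e. cursor \<sigma> \<mu> = Some e \<Longrightarrow> slot_fits \<mu> (front \<sigma>) 0 e"
    and D: "0 \<le> D" "D \<le> capacity \<mu> / 2"
  shows "front \<sigma>' + fill \<mu> (advance c D)
    \<le> front \<sigma> + (case cursor \<sigma> \<mu> of None \<Rightarrow> bin_width \<mu> | Some e \<Rightarrow> fill \<mu> e) + 4 * row_height \<mu> * D"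
proof (cases "cursor \<sigma> \<mu>")
  case None
  then have "c = Slot (front \<sigma>) 0 0" "front \<sigma>' = front \<sigma> + bin_width \<mu>"
    using pk by (auto simp: pack_def)
  then show ?thesis using None by (simp add: fill_def advance_def)
next
  case (Some e)
  obtain X r u where e: "e = Slot X r u" by (cases e)
  have ok: "r < rows \<mu>" "0 \<le> u" "u \<le> capacity \<mu>" using cur[OF Some] by (simp_all add: e slot_fits_def)
  have H: "0 < row_height \<mu>" by (rule row_height_pos)
  consider "u + D \<le> capacity \<mu>" | "capacity \<mu> < u + D" "Suc r < rows \<mu>"
    | "capacity \<mu> < u + D" "Suc r = rows \<mu>"
    using ok(1) by linarith
  then show ?thesis
  proof cases
    case 1
    then have "c = e" "front \<sigma>' = front \<sigma>" using pk Some by (auto simp: pack_def e)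
    then show ?thesis using Some by (simp add: fill_advance)
  next
    case 2
    then have "c = Slot X (Suc r) 0" "front \<sigma>' = front \<sigma>" using pk Some by (auto simp: pack_def e)
    moreover have "fill \<mu> (Slot X (Suc r) 0) \<le> fill \<mu> e"
      using 2 D H by (simp add: fill_def e algebra_simps)
    ultimately show ?thesis using Some by (simp add: fill_advance)
  next
    case 3
    then have "c = Slot (front \<sigma>) 0 0" "front \<sigma>' = front \<sigma> + bin_width \<mu>"
      using pk Some by (auto simp: pack_def e)
    moreover have "bin_width \<mu> \<le> fill \<mu> e"
      using bin_width_le_fill[OF 3(2)] 3(1) D by (simp add: e)
    ultimately show ?thesis using Some by (simp add: fill_def advance_def)
  qed
qed

lemma sum_dom_update:
  fixes f :: "'a \<Rightarrow> 'b \<Rightarrow> real"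
  assumes "finite (dom m)"
  shows "(\<Sum>x\<in>dom (m(a \<mapsto> b)). f x (the ((m(a \<mapsto> b)) x)))
    = (\<Sum>x\<in>dom m. f x (the (m x))) - (case m a of None \<Rightarrow> 0 | Some v \<Rightarrow> f a v) + f a b"
proof -
  have "(\<Sum>x\<in>dom (m(a \<mapsto> b)). f x (the ((m(a \<mapsto> b)) x))) = f a b + (\<Sum>x\<in>dom m - {a}. f x (the (m x)))"
    using assms by (simp add: sum.insert_remove)
  also have "(\<Sum>x\<in>dom m - {a}. f x (the (m x))) = (\<Sum>x\<in>dom m. f x (the (m x))) - (case m a of None \<Rightarrow> 0 | Some v \<Rightarrow> f a v)"
    using assms by (cases "m a") (auto simp: sum_diff1 domI)
  finally show ?thesis by linarith
qed

lemma budget_invariant_pack: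
  assumes inv: "layout_invariant m \<kappa> D c \<sigma>" and bud: "budget_invariant m \<kappa> D \<sigma>"
    and pk: "pack (\<kappa> m) (D m) \<sigma> = (c m, \<sigma>')"
    and D: "0 \<le> D m" "D m \<le> capacity (\<kappa> m) / 2"
  shows "budget_invariant (Suc m) \<kappa> D \<sigma>'"
proof -
  note I = layout_invariantD[OF inv]
  have fin: "finite (dom (cursor \<sigma>))" using I(2) by simp
  have cur': "cursor \<sigma>' = (cursor \<sigma>)(\<kappa> m \<mapsto> advance (c m) (D m))"
    by (rule pack_cases[OF pk I(5) D]) simp_all
  let ?old = "case cursor \<sigma> (\<kappa> m) of None \<Rightarrow> 0 | Some e \<Rightarrow> fill (\<kappa> m) e"
  let ?new = "case cursor \<sigma> (\<kappa> m) of None \<Rightarrow> bin_width (\<kappa> m) | Some e \<Rightarrow> 0"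
  have "potential \<sigma>' = potential \<sigma> - ?old + fill (\<kappa> m) (advance (c m) (D m))"
    unfolding potential_def cur' by (rule sum_dom_update[OF fin])
  moreover have "(\<Sum>\<mu>\<in>dom (cursor \<sigma>'). bin_width \<mu>) = (\<Sum>\<mu>\<in>dom (cursor \<sigma>). bin_width \<mu>) + ?new"
    using fin by (cases "cursor \<sigma> (\<kappa> m)") (auto simp: cur' insert_absorb domI domIff add.commute)
  moreover have "front \<sigma>' + fill (\<kappa> m) (advance (c m) (D m)) \<le> front \<sigma> + ?old + ?new + 4 * row_height (\<kappa> m) * D m"
    using pack_amortized[OF pk I(5) D] by (cases "cursor \<sigma> (\<kappa> m)") simp_all
  ultimately show ?thesis using bud by (simp add: budget_invariant_def)
qed


lemma packer_init_invariants:
  "layout_invariant 0 \<kappa> D c packer_init" "budget_invariant 0 \<kappa> D packer_init"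
  by (simp_all add: layout_invariant_def budget_invariant_def potential_def packer_init_def)

lemma run_invariants:
  assumes I: "admissible_instance I" and m: "m \<le> length I"
  defines "\<kappa> \<equiv> \<lambda>i. classify i (I ! i)" and "D \<equiv> \<lambda>i. row_length i (I ! i)"
  shows "layout_invariant m \<kappa> D (slot_of I) (run (take m I)) \<and> budget_invariant m \<kappa> D (run (take m I))"
  using m
proof (induction m)
  case 0
  then show ?case using packer_init_invariants by (simp add: run_def)
next
  case (Suc m)
  then have m: "m < length I" by simp
  interpret piece "I ! m" using admissible_piece[OF I m] .
  have pk: "pack (\<kappa> m) (D m) (run (take m I)) = (slot_of I m, run (take (Suc m) I))"
    by (simp add: \<kappa>_def D_def slot_of_def run_take_Suc[OF m] pack_piece_def)
  have "0 \<le> D m" "D m \<le> capacity (\<kappa> m) / 2"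
    using row_length_nonneg margin_capacity_bounds(2) by (simp_all add: \<kappa>_def D_def)
  moreover note Suc.IH[OF Suc_leD[OF Suc.prems]]
  ultimately show ?case
    using layout_invariant_pack[of m \<kappa> D "slot_of I", OF _ pk]
      budget_invariant_pack[of m \<kappa> D "slot_of I", OF _ _ pk] by simp
qed

section \<open>Validity and cost of the packing\<close>

context piece
begin

lemma placed_bounds:
  assumes q: "q \<in> translate (place i P c) P"
  defines "\<kappa> \<equiv> classify i P"
  defines "s \<equiv> class_slope \<kappa>" and "y \<equiv> row c * row_height \<kappa>"
  shows "y \<le> snd q" "snd q \<le> y + row_height \<kappa>"
    "bin_x c + margin \<kappa> + offset c \<le> shear s q + s * y"
    "shear s q + s * y \<le> bin_x c + margin \<kappa> + offset c + row_length i P"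
    "bin_x c + offset c \<le> fst q" "fst q \<le> bin_x c + 2 * margin \<kappa> + offset c + row_length i P"
proof -
  obtain p where p: "p \<in> P" "q = p + place i P c" using q by (auto simp: translate_def)
  have sq: "snd q = snd p - min_on snd P + y"
    by (simp add: p place_def Let_def y_def \<kappa>_def)
  have sh: "shear s q + s * y = shear s p - min_on (shear s) P + bin_x c + margin \<kappa> + offset c"
    by (simp add: p place_def Let_def shear_def s_def y_def \<kappa>_def algebra_simps)
  have "min_on snd P \<le> snd p" "snd p \<le> max_on snd P"
    using p(1) min_on_le[OF linear_snd compact] le_max_on[OF linear_snd compact] by auto
  then show y: "y \<le> snd q" "snd q \<le> y + row_height \<kappa>"
    using sq height_le_row_height[of i] by (auto simp: \<kappa>_def extent_def)
  have "min_on (shear s) P \<le> shear s p" "shear s p \<le> max_on (shear s) P"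
    using p(1) min_on_le[OF linear_shear compact] le_max_on[OF linear_shear compact] by auto
  then show shear: "bin_x c + margin \<kappa> + offset c \<le> shear s q + s * y"
    "shear s q + s * y \<le> bin_x c + margin \<kappa> + offset c + row_length i P"
    using sh by (auto simp: row_length_def s_def \<kappa>_def extent_def)
  have "\<bar>s * (snd q - y)\<bar> \<le> \<bar>s\<bar> * row_height \<kappa>"
    using y by (simp add: abs_mult mult_left_mono)
  also have "\<dots> \<le> margin \<kappa>" using margin_capacity_bounds(1)[of i] by (simp add: s_def \<kappa>_def)
  finally have "\<bar>fst q - (shear s q + s * y)\<bar> \<le> margin \<kappa>" by (simp add: shear_def algebra_simps)
  then show "bin_x c + offset c \<le> fst q" "fst q \<le> bin_x c + 2 * margin \<kappa> + offset c + row_length i P"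
    using shear by linarith+
qed

end

text \<open>Two placed pieces are separated by a vertical line, a horizontal line or a line of the
  common class slope.\<close>

lemma placed_before_interiors_disjoint:
  assumes P: "piece P" and P': "piece P'"
    and c: "0 \<le> offset c" "offset c + row_length i P \<le> capacity (classify i P)" and c': "0 \<le> offset c'"
    and before: "bin_x c + bin_width (classify i P) \<le> bin_x c' \<or>
      classify i P = classify j P' \<and> bin_x c = bin_x c' \<and>
      (row c < row c' \<or> row c = row c' \<and> offset c + row_length i P \<le> offset c')"
  shows "interior (translate (place i P c) P) \<inter> interior (translate (place j P' c') P') = {}"
proof -
  define \<kappa> where "\<kappa> = classify i P"
  define s where "s = class_slope \<kappa>"
  define Q where "Q = translate (place i P c) P"
  define Q' where "Q' = translate (place j P' c') P'"
  note R = piece.placed_bounds[OF P, of _ i c, folded \<kappa>_def s_def Q_def]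
  note R' = piece.placed_bounds[OF P', of _ j c', folded Q'_def]
  consider "bin_x c + bin_width \<kappa> \<le> bin_x c'"
    | "classify j P' = \<kappa>" "bin_x c' = bin_x c" "row c < row c'"
    | "classify j P' = \<kappa>" "bin_x c' = bin_x c" "row c' = row c" "offset c + row_length i P \<le> offset c'"
    using before by (auto simp: \<kappa>_def)
  then have "interior Q \<inter> interior Q' = {}"
  proof cases
    case 1
    have "Q \<subseteq> {q. fst q \<le> bin_x c'}" "Q' \<subseteq> {q. bin_x c' \<le> fst q}"
      using R(6) R'(5) c c' 1 bin_width_eq[of \<kappa>] by (force simp: \<kappa>_def)+
    then show ?thesis by (rule interiors_disjoint_if_separated[where v = "(1, 0)"]) (simp_all add: linear_fst)
  next
    case 2
    have "(real (row c) + 1) * row_height \<kappa> \<le> real (row c') * row_height \<kappa>"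
      using 2(3) row_height_pos[of \<kappa>] by (intro mult_right_mono) auto
    then have "real (row c) * row_height \<kappa> + row_height \<kappa> \<le> real (row c') * row_height \<kappa>"
      by (simp add: algebra_simps)
    then have "Q \<subseteq> {q. snd q \<le> row c' * row_height \<kappa>}" "Q' \<subseteq> {q. row c' * row_height \<kappa> \<le> snd q}"
      using R(2) R'(1) 2(1) by force+
    then show ?thesis by (rule interiors_disjoint_if_separated[where v = "(0, 1)"]) (simp_all add: linear_snd)
  next
    case 3
    define b where "b = bin_x c + margin \<kappa> + offset c + row_length i P - s * (row c * row_height \<kappa>)"
    have "Q \<subseteq> {q. shear s q \<le> b}" "Q' \<subseteq> {q. b \<le> shear s q}"
      using R(4) R'(3) 3 by (force simp: b_def s_def)+
    then show ?thesis
      by (rule interiors_disjoint_if_separated[where v = "(1, 0)"]) (simp_all add: linear_shear, simp add: shear_def)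
  qed
  then show ?thesis by (simp add: Q_def Q'_def)
qed

lemma placed_interiors_disjoint:
  assumes P: "piece P" and P': "piece P'"
    and c: "slot_fits (classify i P) F (row_length i P) c" and c': "slot_fits (classify j P') F (row_length j P') c'"
    and apart: "slots_apart (classify i P) (row_length i P) c (classify j P') (row_length j P') c'"
  shows "interior (translate (place i P c) P) \<inter> interior (translate (place j P' c') P') = {}"
proof -
  consider "bin_x c + bin_width (classify i P) \<le> bin_x c' \<or>
      classify i P = classify j P' \<and> bin_x c = bin_x c' \<and>
      (row c < row c' \<or> row c = row c' \<and> offset c + row_length i P \<le> offset c')"
    | "bin_x c' + bin_width (classify j P') \<le> bin_x c \<or>
      classify j P' = classify i P \<and> bin_x c' = bin_x c \<and>
      (row c' < row c \<or> row c' = row c \<and> offset c' + row_length j P' \<le> offset c)"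
    using apart bin_width_pos[of "classify i P"]
    by (cases "row c" "row c'" rule: linorder_cases) (auto simp: slots_apart_def bins_apart_def)
  then show ?thesis
  proof cases
    case 1
    then show ?thesis using placed_before_interiors_disjoint[OF P P'] c c' by (simp add: slot_fits_def)
  next
    case 2
    have "interior (translate (place j P' c') P') \<inter> interior (translate (place i P c) P) = {}"
      by (rule placed_before_interiors_disjoint[OF P' P]) (use 2 c c' in \<open>auto simp: slot_fits_def\<close>)
    then show ?thesis by (simp add: Int_commute)
  qed
qed


context
  fixes I assumes I: "admissible_instance I"
begin

lemma layout_invariant_run:
  "layout_invariant (length I) (\<lambda>i. classify i (I ! i)) (\<lambda>i. row_length i (I ! i)) (slot_of I) (run I)"
  using run_invariants[OF I order.refl] by simp

lemma placed_in_bin: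
  assumes i: "i < length I" and q: "q \<in> translate (alg_placement alg I i) (I ! i)"
  shows "q \<in> strip" "fst q \<le> front (run I)"
proof -
  interpret piece "I ! i" using admissible_piece[OF I i] .
  define \<kappa> where "\<kappa> = classify i (I ! i)"
  have ok: "slot_fits \<kappa> (front (run I)) (row_length i (I ! i)) (slot_of I i)"
    using layout_invariantD(3)[OF layout_invariant_run i] by (simp add: \<kappa>_def)
  note R = placed_bounds[OF q[unfolded alg_placement_eq[OF i]], folded \<kappa>_def]
  have "real (row (slot_of I i)) + 1 \<le> real (rows \<kappa>)" using ok by (simp add: slot_fits_def)
  then have "real (row (slot_of I i)) * row_height \<kappa> + row_height \<kappa> \<le> 1"
    using rows_row_height[of \<kappa>] row_height_pos[of \<kappa>] by (metis distrib_right mult_1 mult_right_mono less_imp_le)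
  moreover have "0 \<le> real (row (slot_of I i)) * row_height \<kappa>" using row_height_pos[of \<kappa>] by simp
  moreover have "0 \<le> bin_x (slot_of I i) + offset (slot_of I i)" using ok by (simp add: slot_fits_def)
  ultimately have "0 \<le> snd q" "snd q \<le> 1" "0 \<le> fst q" using R(1,2,5) by linarith+
  then show "q \<in> strip" by (simp add: strip_def)
  show "fst q \<le> front (run I)" using R(6) ok bin_width_eq[of \<kappa>] by (simp add: slot_fits_def)
qed

lemma alg_valid_placement: "valid_placement I (alg_placement alg I)"
  unfolding valid_placement_def
proof (intro conjI allI impI)
  show "translate (alg_placement alg I i) (I ! i) \<subseteq> strip" if "i < length I" for i
    using placed_in_bin(1)[OF that] by blast
  fix i j assume ij: "i < length I" "j < length I" "i \<noteq> j"
  note L = layout_invariantD[OF layout_invariant_run]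
  show "interior (translate (alg_placement alg I i) (I ! i)) \<inter> interior (translate (alg_placement alg I j) (I ! j)) = {}"
    using placed_interiors_disjoint[OF admissible_piece[OF I ij(1)] admissible_piece[OF I ij(2)]
        L(3)[OF ij(1)] L(3)[OF ij(2)] L(4)[OF ij]]
    by (simp add: alg_placement_eq ij)
qed

lemma alg_cost_le:
  assumes ne: "I \<noteq> []"
  shows "packing_cost I (alg_placement alg I)
    \<le> (\<Sum>\<kappa>\<in>(\<lambda>i. classify i (I ! i)) ` {..<length I}. bin_width \<kappa>)
      + (\<Sum>i<length I. 4 * row_height (classify i (I ! i)) * row_length i (I ! i))"
proof -
  have "packing_cost I (alg_placement alg I) \<le> front (run I)"
    using placed_in_bin(2) by (intro packing_cost_le[OF I ne])
  moreover have "0 \<le> potential (run I)"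
    unfolding potential_def
    using layout_invariantD(5)[OF layout_invariant_run] by (intro sum_nonneg fill_nonneg) (auto simp: slot_fits_def)
  moreover have "budget_invariant (length I) (\<lambda>i. classify i (I ! i)) (\<lambda>i. row_length i (I ! i)) (run I)"
    using run_invariants[OF I order.refl] by simp
  ultimately show ?thesis
    using layout_invariantD(2)[OF layout_invariant_run] by (simp add: budget_invariant_def)
qed

end

lemma alg_valid: "online_valid alg"
  by (simp add: online_valid_def alg_valid_placement)

section \<open>The competitive ratio\<close>

context
  fixes I assumes I: "admissible_instance I" and ne: "I \<noteq> []"
begin

lemma le_OPT_if_le_packing_cost: "(\<And>t. valid_placement I t \<Longrightarrow> B \<le> packing_cost I t) \<Longrightarrow> B \<le> OPT I"
  using le_OPT alg_valid_placement[OF I] by blast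

lemma OPT_nonneg: "0 \<le> OPT I"
  using le_OPT_if_le_packing_cost packing_cost_nonneg[OF I _ ne] by blast

lemma width_le_OPT: "i < length I \<Longrightarrow> width (I ! i) \<le> OPT I"
  using le_OPT_if_le_packing_cost width_le_packing_cost[OF I] by blast

lemma sum_skew_width_le_OPT:
  "(\<Sum>i | i < length I \<and> 1 / 2 ^ (k + 1) < height (I ! i). skew_width (I ! i))
     \<le> 4 * (4 * 2 ^ k + 1) * OPT I"
proof -
  define S where "S = (\<Sum>i | i < length I \<and> 1 / 2 ^ (k + 1) < height (I ! i). skew_width (I ! i))"
  define c :: real where "c = 4 * (4 * 2 ^ k + 1)"
  have c: "0 < c" unfolding c_def by (intro mult_pos_pos add_nonneg_pos) auto
  have "S / c \<le> OPT I"
  proof (rule le_OPT_if_le_packing_cost)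
    fix t assume "valid_placement I t"
    from sum_skew_width_le_packing_cost[OF I this ne, of k]
    show "S / c \<le> packing_cost I t" using c by (simp add: S_def c_def pos_divide_le_eq mult.commute)
  qed
  then show ?thesis using c by (simp add: S_def c_def pos_divide_le_eq mult.commute)
qed

end

lemma sum_powr_lt_powr_Max:
  fixes E :: "int set"
  assumes "finite E" "E \<noteq> {}"
  shows "(\<Sum>e\<in>E. 2 powr e) < 2 powr (Max E + 1)"
  using assms
proof (induction "card E" arbitrary: E)
  case 0
  then show ?case by simp
next
  case (Suc n)
  define m where "m = Max E"
  have m: "m \<in> E" using Suc.prems by (simp add: m_def)
  have sum: "(\<Sum>e\<in>E. 2 powr e) = 2 powr m + (\<Sum>e\<in>E - {m}. 2 powr e)"
    using sum.remove[OF Suc.prems(1) m] by simp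
  show ?case
  proof (cases "E - {m} = {}")
    case True
    then have "(\<Sum>e\<in>E - {m}. 2 powr e) = 0" by (metis sum.empty)
    then show ?thesis using sum by (simp add: m_def powr_add)
  next
    case False
    have "Max (E - {m}) < m"
      using False Suc.prems Max_in[of "E - {m}"] by (auto simp: m_def intro: order.not_eq_order_implies_strict)
    then have "2 powr (Max (E - {m}) + 1) \<le> 2 powr m" by (intro powr_mono) auto
    moreover have "(\<Sum>e\<in>E - {m}. 2 powr e) < 2 powr (Max (E - {m}) + 1)"
      using Suc.hyps(1)[of "E - {m}"] Suc.hyps(2) Suc.prems m False by simp
    ultimately show ?thesis using sum by (simp add: m_def powr_add)
  qed
qed

context piece
begin

lemma class_index_bounds:
  "cl_row_exp (classify i P) \<le> 2 * level i"
  "\<bar>cl_slope_index (classify i P)\<bar> \<le> 2 ^ (level i + 1)"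
proof -
  show "cl_row_exp (classify i P) \<le> 2 * level i" by (simp add: classify_def row_exp_def)
  show "\<bar>cl_slope_index (classify i P)\<bar> \<le> 2 ^ (level i + 1)"
  proof (cases "2 * level i \<le> height_exp P")
    case False
    define \<kappa> where "\<kappa> = classify i P"
    define z where "z = slope P * row_height \<kappa> / granularity \<kappa>"
    have g: "0 < granularity \<kappa>" by (simp add: granularity_def unit_width_pos)
    have "cl_slope_index \<kappa> = round z"
      using False by (simp add: \<kappa>_def classify_def slope_index_def row_exp_def z_def granularity_def
          unit_width_def row_height_def field_simps)
    moreover have "\<bar>z\<bar> \<le> 2 * width P / granularity \<kappa>"
      using steep_class(3)[of i] False g row_height_pos[of \<kappa>]
      by (simp add: z_def \<kappa>_def abs_mult divide_right_mono)
    moreover have "2 * width P / granularity \<kappa> \<le> 2 ^ (level i + 1)"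
      using width_exp_bounds(1) g
      by (simp add: granularity_def \<kappa>_def classify_def unit_width_def field_simps)
    ultimately have "\<bar>real_of_int (cl_slope_index \<kappa>)\<bar> < 2 ^ (level i + 1) + 1"
      using of_int_round_abs_le[of z] by linarith
    then have "real_of_int \<bar>cl_slope_index \<kappa>\<bar> < real_of_int (2 ^ (level i + 1) + 1)" by simp
    then show ?thesis unfolding \<kappa>_def by (simp only: of_int_less_iff)
  qed (simp add: classify_def slope_index_def)
qed

end

lemma classify_bounds:
  assumes I: "admissible_instance I" and i: "i < length I"
  defines "a \<equiv> level (length I - 1)" and "\<kappa> \<equiv> classify i (I ! i)"
  shows "cl_level \<kappa> \<le> a \<and> cl_row_exp \<kappa> \<le> 2 * a \<and> \<bar>cl_slope_index \<kappa>\<bar> \<le> 2 ^ (a + 1)"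
proof -
  interpret piece "I ! i" using admissible_piece[OF I i] .
  have "level i \<le> a" unfolding a_def using i by (intro level_mono) simp
  moreover from this have "(2::int) ^ (level i + 1) \<le> 2 ^ (a + 1)" by (intro power_increasing) simp_all
  moreover have "cl_level \<kappa> = level i" by (simp add: \<kappa>_def classify_def)
  ultimately show ?thesis using class_index_bounds[of i] unfolding \<kappa>_def by linarith
qed

lemma card_classes_with_width_exp_le:
  assumes "\<And>\<kappa>. \<kappa> \<in> K \<Longrightarrow> cl_level \<kappa> \<le> a \<and> cl_row_exp \<kappa> \<le> 2 * a \<and> \<bar>cl_slope_index \<kappa>\<bar> \<le> 2 ^ (a + 1)"
  shows "card {\<kappa> \<in> K. cl_width_exp \<kappa> = e} \<le> (a + 1) * (2 * a + 1) * (2 ^ (a + 2) + 1)"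
proof -
  define M :: int where "M = 2 ^ (a + 1)"
  define Box where "Box = {..a} \<times> {..2 * a} \<times> {-M..M}"
  have "{\<kappa> \<in> K. cl_width_exp \<kappa> = e} \<subseteq> (\<lambda>(l, k, j). Class l e k j) ` Box"
  proof
    fix \<kappa> assume \<kappa>: "\<kappa> \<in> {\<kappa> \<in> K. cl_width_exp \<kappa> = e}"
    obtain l e' k j where "\<kappa> = Class l e' k j" by (cases \<kappa>)
    moreover have "(l, k, j) \<in> Box" using assms[of \<kappa>] \<kappa> calculation by (auto simp: Box_def M_def abs_le_iff)
    ultimately show "\<kappa> \<in> (\<lambda>(l, k, j). Class l e k j) ` Box"
      using \<kappa> by (auto intro!: image_eqI[where x = "(l, k, j)"])
  qed
  moreover have "finite Box" by (simp add: Box_def)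
  ultimately have "card {\<kappa> \<in> K. cl_width_exp \<kappa> = e} \<le> card ((\<lambda>(l, k, j). Class l e k j) ` Box)"
    by (intro card_mono finite_imageI)
  also have "\<dots> \<le> card Box" using \<open>finite Box\<close> by (rule card_image_le)
  also have "card Box = (a + 1) * (2 * a + 1) * (2 ^ (a + 2) + 1)"
    by (simp add: Box_def card_cartesian_product M_def nat_add_distrib nat_mult_distrib nat_power_eq
        algebra_simps)
  finally show ?thesis .
qed

lemma sum_width_exp_le_OPT:
  assumes I: "admissible_instance I" and ne: "I \<noteq> []"
  shows "(\<Sum>e\<in>(\<lambda>i. width_exp (I ! i)) ` {..<length I}. 2 powr e) \<le> 4 * OPT I"
proof -
  define E where "E = (\<lambda>i. width_exp (I ! i)) ` {..<length I}"
  have E: "finite E" "E \<noteq> {}" using ne by (auto simp: E_def)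
  obtain i where i: "i < length I" "Max E = width_exp (I ! i)" using Max_in[OF E] by (auto simp: E_def)
  interpret piece "I ! i" using admissible_piece[OF I i(1)] .
  have "(\<Sum>e\<in>E. 2 powr e) < 2 * 2 powr width_exp (I ! i)"
    using sum_powr_lt_powr_Max[OF E] i(2) by (simp add: powr_add)
  also have "\<dots> < 4 * width (I ! i)" using width_exp_bounds(2) by simp
  also have "\<dots> \<le> 4 * OPT I" using width_le_OPT[OF I ne i(1)] by simp
  finally show ?thesis by (simp add: E_def)
qed

lemma sum_bin_width_le:
  assumes I: "admissible_instance I" and ne: "I \<noteq> []"
  defines "a \<equiv> level (length I - 1)"
  shows "(\<Sum>\<kappa>\<in>(\<lambda>i. classify i (I ! i)) ` {..<length I}. bin_width \<kappa>)
    \<le> 48 * (real a + 1) * (2 * real a + 1) * (2 ^ (a + 2) + 1) * OPT I"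
proof -
  define K where "K = (\<lambda>i. classify i (I ! i)) ` {..<length I}"
  define E where "E = cl_width_exp ` K"
  define N where "N = (a + 1) * (2 * a + 1) * (2 ^ (a + 2) + 1)"
  have E: "E = (\<lambda>i. width_exp (I ! i)) ` {..<length I}"
    by (auto simp: E_def K_def classify_def image_image)
  have card: "card {\<kappa> \<in> K. cl_width_exp \<kappa> = e} \<le> N" for e
    unfolding N_def a_def using classify_bounds[OF I] by (intro card_classes_with_width_exp_le) (auto simp: K_def)
  have "(\<Sum>\<kappa>\<in>K. bin_width \<kappa>) = (\<Sum>e\<in>E. \<Sum>\<kappa>\<in>{\<kappa> \<in> K. cl_width_exp \<kappa> = e}. 12 * 2 powr e)"
    by (subst sum.group[of K E cl_width_exp, symmetric]) (auto simp: K_def E_def bin_width_def unit_width_def)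
  also have "\<dots> \<le> (\<Sum>e\<in>E. real N * (12 * 2 powr e))"
  proof (intro sum_mono)
    fix e
    have "real (card {\<kappa> \<in> K. cl_width_exp \<kappa> = e}) \<le> real N"
      using card[of e] by (simp only: of_nat_le_iff)
    then show "(\<Sum>\<kappa>\<in>{\<kappa> \<in> K. cl_width_exp \<kappa> = e}. 12 * 2 powr e) \<le> real N * (12 * 2 powr e)"
      by (simp add: mult_right_mono)
  qed
  also have "\<dots> = 12 * N * (\<Sum>e\<in>E. 2 powr e)"
    unfolding sum_distrib_left by (rule sum.cong) (simp_all add: mult_ac)
  also have "\<dots> \<le> 12 * N * (4 * OPT I)"
    using sum_width_exp_le_OPT[OF I ne] by (intro mult_left_mono) (simp_all add: E)
  finally show ?thesis by (simp add: K_def N_def algebra_simps)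
qed

lemma sum_inverse_sqrt_le: "(\<Sum>i<n. 1 / sqrt (real i + 1)) \<le> 2 * sqrt (real n)"
proof (induction n)
  case (Suc n)
  have "(sqrt (real n + 1) - sqrt (real n)) * (sqrt (real n + 1) + sqrt (real n)) = 1"
    by (simp add: algebra_simps)
  moreover have "0 < sqrt (real n + 1) + sqrt (real n)" by (simp add: add_pos_nonneg)
  ultimately have "sqrt (real n + 1) - sqrt (real n) = 1 / (sqrt (real n + 1) + sqrt (real n))"
    by (simp add: eq_divide_eq)
  also have "\<dots> \<ge> 1 / (2 * sqrt (real n + 1))"
    by (intro divide_left_mono) (auto intro!: add_pos_nonneg mult_pos_pos)
  finally have "1 / sqrt (real n + 1) \<le> 2 * sqrt (real n + 1) - 2 * sqrt (real n)"
    by (simp add: field_simps)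
  then show ?case using Suc by (simp add: add.commute)
qed simp

context piece
begin

lemma row_charge_flat:
  assumes "2 * level i \<le> height_exp P"
  shows "4 * row_height (classify i P) * row_length i P \<le> 4 * width P / sqrt (real i + 1)"
proof -
  have sq: "1 \<le> sqrt (real i + 1)" "sqrt (real i + 1) \<le> 2 ^ level i" using sqrt_le_two_power_level by auto
  then have "sqrt (real i + 1) * 1 \<le> 2 ^ level i * 2 ^ level i" by (intro mult_mono) auto
  then have "sqrt (real i + 1) \<le> 2 ^ (2 * level i)" by (simp add: mult_2 power_add)
  then show ?thesis
    using assms width_pos sq row_length_flat
    by (simp add: classify_def row_exp_def row_height_def min_def divide_left_mono)
qed

text \<open>The rounding error of the class slope is paid by the width, since the slope granularity
  shrinks like \<open>1/\<surd>(i + 1)\<close>.\<close>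

lemma row_charge_steep:
  assumes steep: "height_exp P < 2 * level i"
  shows "4 * row_height (classify i P) * row_length i P
    \<le> 4 * skew_width P / 2 ^ height_exp P + 4 * width P / sqrt (real i + 1)"
proof -
  define \<kappa> where "\<kappa> = classify i P"
  have H: "row_height \<kappa> = 1 / 2 ^ height_exp P"
    using steep by (simp add: \<kappa>_def classify_def row_exp_def row_height_def)
  have "granularity \<kappa> \<le> 2 * width P / 2 ^ level i"
    using width_exp_bounds(2) by (simp add: \<kappa>_def classify_def granularity_def unit_width_def divide_right_mono)
  also have "\<dots> \<le> 2 * width P / sqrt (real i + 1)"
    using sqrt_le_two_power_level width_pos by (intro divide_left_mono) auto
  finally have g: "granularity \<kappa> \<le> 2 * (width P / sqrt (real i + 1))" by simp
  have "4 * row_height \<kappa> * row_length i P \<le> 4 * row_height \<kappa> * (skew_width P + granularity \<kappa> / 2)"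
    using row_length_steep[OF steep] row_height_pos[of \<kappa>] by (simp add: \<kappa>_def)
  also have "\<dots> = 4 * skew_width P / 2 ^ height_exp P + 2 * (row_height \<kappa> * granularity \<kappa>)"
    by (simp add: H field_simps)
  also have "row_height \<kappa> * granularity \<kappa> \<le> granularity \<kappa>"
    using H unit_width_pos[of \<kappa>] by (intro mult_left_le_one_le) (simp_all add: granularity_def)
  also note g
  finally show ?thesis by (simp add: \<kappa>_def)
qed

end

context
  fixes I assumes I: "admissible_instance I" and ne: "I \<noteq> []"
begin

lemma sum_width_charge_le_OPT:
  "(\<Sum>i<length I. 4 * width (I ! i) / sqrt (real i + 1)) \<le> 8 * sqrt (length I) * OPT I"
proof -
  have "(\<Sum>i<length I. 4 * width (I ! i) / sqrt (real i + 1))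
      \<le> (\<Sum>i<length I. 4 * OPT I * (1 / sqrt (real i + 1)))"
    using width_le_OPT[OF I ne] by (intro sum_mono) (simp add: divide_right_mono)
  also have "\<dots> = 4 * OPT I * (\<Sum>i<length I. 1 / sqrt (real i + 1))" by (simp add: sum_distrib_left)
  also have "\<dots> \<le> 4 * OPT I * (2 * sqrt (length I))"
    using sum_inverse_sqrt_le OPT_nonneg[OF I ne] by (intro mult_left_mono) auto
  finally show ?thesis by (simp add: mult_ac)
qed

text \<open>
  A steep piece of height class \<open>k\<close> has height more than \<open>2^-(k+1)\<close>, so each class contributes
  at most \<open>4/2^k \<cdot> 4 (4 \<cdot> 2^k + 1) OPT \<le> 80 OPT\<close>.\<close>

lemma sum_steep_charge_le_OPT:
  defines "a \<equiv> level (length I - 1)"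
  shows "(\<Sum>i | i < length I \<and> height_exp (I ! i) < 2 * level i. 4 * skew_width (I ! i) / 2 ^ height_exp (I ! i))
    \<le> 80 * (2 * real a + 1) * OPT I"
proof -
  define S where "S = {i. i < length I \<and> height_exp (I ! i) < 2 * level i}"
  note piece = admissible_piece[OF I]
  have "height_exp (I ! i) \<le> 2 * a" if "i \<in> S" for i
  proof -
    have "i < length I" "height_exp (I ! i) < 2 * level i" using that by (simp_all add: S_def)
    moreover from this have "level i \<le> a" unfolding a_def by (intro level_mono) simp
    ultimately show ?thesis by simp
  qed
  then have "(\<Sum>i\<in>S. 4 * skew_width (I ! i) / 2 ^ height_exp (I ! i))
      = (\<Sum>k\<le>2 * a. \<Sum>i | i \<in> S \<and> height_exp (I ! i) = k. 4 * skew_width (I ! i) / 2 ^ k)"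
    by (subst sum.group[of S "{..2 * a}" "\<lambda>i. height_exp (I ! i)", symmetric])
      (auto simp: S_def intro!: sum.cong)
  also have "\<dots> \<le> (\<Sum>k\<le>2 * a. 80 * OPT I)"
  proof (rule sum_mono)
    fix k
    have sub: "{i. i \<in> S \<and> height_exp (I ! i) = k} \<subseteq> {i. i < length I \<and> 1 / 2 ^ (k + 1) < height (I ! i)}"
      using piece.height_exp_bounds(2)[OF piece] by (auto simp: S_def)
    have "(\<Sum>i | i \<in> S \<and> height_exp (I ! i) = k. skew_width (I ! i))
        \<le> (\<Sum>i | i < length I \<and> 1 / 2 ^ (k + 1) < height (I ! i). skew_width (I ! i))"
      by (rule sum_mono2[OF _ sub])
        (auto simp: skew_width_def intro!: extent_nonneg[OF linear_shear] piece.compact piece.nonempty piece)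
    also have "\<dots> \<le> 4 * (4 * 2 ^ k + 1) * OPT I" by (rule sum_skew_width_le_OPT[OF I ne])
    finally have "(\<Sum>i | i \<in> S \<and> height_exp (I ! i) = k. 4 * skew_width (I ! i) / 2 ^ k)
        \<le> 4 / 2 ^ k * (4 * (4 * 2 ^ k + 1) * OPT I)"
      by (simp add: sum_distrib_left[symmetric] sum_divide_distrib[symmetric] divide_right_mono)
    also have "\<dots> = (64 + 16 / 2 ^ k) * OPT I" by (simp add: field_simps)
    also have "\<dots> \<le> 80 * OPT I" using OPT_nonneg[OF I ne] by (intro mult_right_mono) (auto simp: field_simps)
    finally show "(\<Sum>i | i \<in> S \<and> height_exp (I ! i) = k. 4 * skew_width (I ! i) / 2 ^ k) \<le> 80 * OPT I" .
  qed
  finally show ?thesis by (simp add: S_def algebra_simps)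
qed

lemma sum_row_charge_le:
  defines "a \<equiv> level (length I - 1)"
  shows "(\<Sum>i<length I. 4 * row_height (classify i (I ! i)) * row_length i (I ! i))
     \<le> (80 * (2 * real a + 1) + 8 * sqrt (length I)) * OPT I"
proof -
  define S where "S = {i \<in> {..<length I}. height_exp (I ! i) < 2 * level i}"
  define c where "c i = 4 * skew_width (I ! i) / 2 ^ height_exp (I ! i)" for i
  have "(\<Sum>i<length I. 4 * row_height (classify i (I ! i)) * row_length i (I ! i))
      \<le> (\<Sum>i<length I. (if height_exp (I ! i) < 2 * level i then c i else 0)
        + 4 * width (I ! i) / sqrt (real i + 1))"
  proof (rule sum_mono)
    fix i assume "i \<in> {..<length I}"
    then interpret piece "I ! i" using admissible_piece[OF I] by simp
    show "4 * row_height (classify i (I ! i)) * row_length i (I ! i)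
      \<le> (if height_exp (I ! i) < 2 * level i then c i else 0) + 4 * width (I ! i) / sqrt (real i + 1)"
      using row_charge_flat[of i] row_charge_steep[of i] by (simp add: c_def)
  qed
  also have "\<dots> = (\<Sum>i\<in>S. c i) + (\<Sum>i<length I. 4 * width (I ! i) / sqrt (real i + 1))"
  proof -
    have "(\<Sum>i<length I. if height_exp (I ! i) < 2 * level i then c i else 0) = (\<Sum>i\<in>S. c i)"
      unfolding S_def by (rule sum.inter_filter[symmetric]) simp
    then show ?thesis by (simp add: sum.distrib)
  qed
  also have "\<dots> \<le> 80 * (2 * real a + 1) * OPT I + 8 * sqrt (length I) * OPT I"
    using sum_steep_charge_le_OPT sum_width_charge_le_OPT unfolding S_def c_def a_def
    by (intro add_mono) (simp_all add: conj_commute)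
  finally show ?thesis by (simp add: algebra_simps)
qed

end

definition ratio :: "nat \<Rightarrow> real" where
  "ratio n = (let a = level (n - 1) in
     48 * (real a + 1) * (2 * real a + 1) * (2 ^ (a + 2) + 1) + 80 * (2 * real a + 1) + 8 * sqrt n)"

theorem alg_competitive:
  assumes I: "admissible_instance I" and ne: "I \<noteq> []"
  shows "packing_cost I (alg_placement alg I) \<le> ratio (length I) * OPT I"
  using alg_cost_le[OF I ne] sum_bin_width_le[OF I ne] sum_row_charge_le[OF I ne]
  by (simp add: ratio_def Let_def algebra_simps)

lemma two_power_level_le:
  assumes n: "1 \<le> n" shows "2 ^ level (n - 1) \<le> 2 * sqrt n"
proof (cases "level (n - 1)")
  case (Suc b)
  have "4 ^ b < n" using level_bounds(2)[of "n - 1"] n Suc by simp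
  then have "real (4 ^ b) < real n" by (simp only: of_nat_less_iff)
  moreover have "real (4 ^ b) = (2 ^ b)\<^sup>2" by (simp add: power2_eq_square flip: power_mult_distrib)
  ultimately have "(2 ^ b)\<^sup>2 < real n" by linarith
  then have "2 ^ b < sqrt n" using real_less_rsqrt by blast
  then show ?thesis using Suc by simp
next
  case 0
  have "1 \<le> sqrt (real n)" using n by simp
  then have "1 \<le> 2 * sqrt (real n)" by linarith
  then show ?thesis using 0 by simp
qed

lemma ratio_le: "1 \<le> n \<Longrightarrow> ratio n \<le> 520 * (log 2 n + 3)\<^sup>2 * sqrt n"
proof -
  assume n: "1 \<le> n"
  define a where "a = level (n - 1)"
  define X where "X = log 2 n + 3"
  define Y where "Y = X * X * sqrt n"
  define A where "A = (real a + 1) * (2 * real a + 1) * (2 ^ (a + 2) + 1)"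
  have r: "1 \<le> sqrt n" using n by simp
  have p: "2 ^ a \<le> 2 * sqrt n" unfolding a_def by (rule two_power_level_le[OF n])
  have "real a = log 2 (2 ^ a)" by (simp add: log_nat_power)
  also have "\<dots> \<le> log 2 (2 * sqrt n)" using p n by (subst log_le_cancel_iff) auto
  also have "\<dots> = 1 + log 2 (sqrt n)" using n by (simp add: log_mult)
  also have "log 2 (sqrt n) = log 2 n / 2" using n by (simp add: log_def ln_sqrt)
  finally have aX: "real a + 1 \<le> X" "2 * real a + 1 \<le> X" using n by (auto simp: X_def)
  have X: "3 \<le> X" using n by (simp add: X_def)
  have "(2::real) ^ (a + 2) = 4 * 2 ^ a" by (simp add: power_add)
  then have "2 ^ (a + 2) + 1 \<le> 9 * sqrt n" using p r by linarith
  then have "(real a + 1) * (2 * real a + 1) * (2 ^ (a + 2) + 1) \<le> X * X * (9 * sqrt n)"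
    using aX by (intro mult_mono) auto
  then have 1: "A \<le> 9 * Y" by (simp add: A_def Y_def)
  have XX: "X \<le> X * X" using mult_left_mono[of 1 X X] X by simp
  then have "1 \<le> X * X" using X by linarith
  moreover have "X * X \<le> Y" using mult_left_mono[of 1 "sqrt n" "X * X"] r X by (simp add: Y_def)
  ultimately have 2: "2 * real a + 1 \<le> Y" using aX XX by linarith
  have 3: "sqrt n \<le> Y" using mult_right_mono[OF \<open>1 \<le> X * X\<close>, of "sqrt n"] by (simp add: Y_def)
  have "ratio n = 48 * A + 80 * (2 * real a + 1) + 8 * sqrt n"
    by (simp add: ratio_def a_def A_def Let_def)
  also have "\<dots> \<le> 48 * (9 * Y) + 80 * Y + 8 * Y"
    using 1 2 3 by (intro add_mono) simp_all
  finally show ?thesis by (simp add: Y_def X_def power2_eq_square algebra_simps)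
qed

lemma log2_3_ge: "31 / 20 \<le> log 2 (3::real)"
proof -
  have "(2 powr (31 / 20 :: real)) ^ 20 = 2 ^ 31" by (simp flip: powr_realpow add: powr_powr)
  also have "\<dots> \<le> (3::real) ^ 20" by simp
  finally have "2 powr (31 / 20 :: real) \<le> 3" by (subst (asm) power_mono_iff) auto
  then show ?thesis by (subst le_log_iff) auto
qed

lemma ratio_bigo: "ratio \<in> O(\<lambda>n. real n powr (log 2 3 - 1) * log 2 (real n))"
proof -
  have "ratio \<in> O(\<lambda>n. 520 * (log 2 n + 3)\<^sup>2 * sqrt n)"
  proof (intro bigoI[of _ 1] eventually_mono[OF eventually_ge_at_top[of "1::nat"]])
    fix n :: nat assume "1 \<le> n"
    moreover have "0 \<le> ratio n" by (simp add: ratio_def Let_def)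
    ultimately show "norm (ratio n) \<le> 1 * norm (520 * (log 2 n + 3)\<^sup>2 * sqrt n)"
      using ratio_le by simp
  qed
  also have "(\<lambda>n. 520 * (log 2 n + 3)\<^sup>2 * sqrt n) \<in> O(\<lambda>n. real n powr (11 / 20))"
    by real_asymp
  also have "(\<lambda>n. real n powr (11 / 20)) \<in> O(\<lambda>n. real n powr (log 2 3 - 1) * log 2 (real n))"
  proof (intro bigoI[of _ 1] eventually_mono[OF eventually_ge_at_top[of "2::nat"]])
    fix n :: nat assume n: "2 \<le> n"
    have "real n powr (11 / 20) \<le> real n powr (log 2 3 - 1)"
      using log2_3_ge n by (intro powr_mono) auto
    also have "\<dots> \<le> real n powr (log 2 3 - 1) * log 2 n"
      using n by (intro mult_le_cancel_left1[THEN iffD2]) auto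
    finally show "norm (real n powr (11 / 20)) \<le> 1 * norm (real n powr (log 2 3 - 1) * log 2 n)"
      using n by simp
  qed
  finally show ?thesis .
qed

theorem theorem5:
  shows "\<exists>(A :: online_alg) (f :: nat \<Rightarrow> real).
           has_competitive_ratio A f \<and>
           f \<in> O(\<lambda>n. real n powr (log 2 3 - 1) * log 2 (real n))"
proof (intro exI conjI)
  show "has_competitive_ratio alg ratio"
    unfolding has_competitive_ratio_def using alg_valid alg_competitive by blast
  show "ratio \<in> O(\<lambda>n. real n powr (log 2 3 - 1) * log 2 (real n))" by (rule ratio_bigo)
qed

end
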